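(* Let $0<\alpha<1$ and $U$ be uniform on $[0,1]$. Then: (i) for $\theta>0$, with $W^{1/\alpha}_{\alpha,\theta}:=\big(\frac{U^{\alpha/\theta}}{1-U^{\alpha/\theta}}\big)^{1/\alpha}$ (which has cdf $y^\theta(1+y^\alpha)^{-\theta/\alpha}$ and density $\theta y^{\theta-1}(1+y^\alpha)^{-(\theta+\alpha)/\alpha}$, $y>0$), \[W^{1/\alpha}_{\alpha,\theta}\stackrel{d}{=}\Big(\frac{\gamma_{\theta/\alpha}}{\gamma_1}\Big)^{1/\alpha}\stackrel{d}{=}\frac{\chi_{\alpha,\theta}}{\gamma_1}\stackrel{d}{=}\frac{\gamma_\theta}{\gamma_1}X_{\alpha,\theta};\] (ii) for $0<\sigma\le1$, the random variable $\Sigma_{\alpha,\sigma}:=\gamma_1/X^{(\sigma)}_{\alpha,1}$ has Laplace transform $\mathbb{E}[e^{-\lambda\Sigma_{\alpha,\sigma}}]=1-\lambda^\sigma(1+\lambda^\alpha)^{-\sigma/\alpha}$, $\lambda\ge0$.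
   Context: $S_\alpha$ is positive stable with $\mathbb{E}[e^{-\lambda S_\alpha}]=e^{-\lambda^\alpha}$ and density $f_\alpha$; $S_{\alpha,\theta}$ ($\theta>-\alpha$) has density proportional to $t^{-\theta}f_\alpha(t)$; $X_{\alpha,\theta}:=S_\alpha/S_{\alpha,\theta}$ (independent). $\gamma_a$ is Gamma$(a,1)$, $\beta_{a,b}$ Beta$(a,b)$ ($\beta_{a,0}:=1$); all variables in ratios/products are independent. $\chi_{\alpha,\theta}:=\gamma_{\theta/\alpha}^{1/\alpha}S_\alpha$. $X^{(\sigma)}_{\alpha,1}:=\beta_{\sigma,1-\sigma}X_{\alpha,\sigma}$. *)

theory Defs
  imports "HOL-Probability.Probability"
begin

definition pos_stable_density :: "real \<Rightarrow> (real \<Rightarrow> real) \<Rightarrow> bool" where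
  "pos_stable_density \<alpha> f \<longleftrightarrow> f \<in> borel_measurable borel \<and> (\<forall>t. 0 \<le> f t) \<and> (\<forall>t\<le>0. f t = 0) \<and>
     (\<forall>l\<ge>0. has_bochner_integral lborel (\<lambda>t. exp (-(l*t)) * f t) (exp (-(l powr \<alpha>))))"

definition stable_law :: "(real \<Rightarrow> real) \<Rightarrow> real measure" where
  "stable_law f = density lborel (\<lambda>t. ennreal (f t))"

definition tilted_stable_law :: "(real \<Rightarrow> real) \<Rightarrow> real \<Rightarrow> real measure" where
  "tilted_stable_law f \<theta> = density lborel (\<lambda>t. ennreal (if 0 < t then
      t powr (-\<theta>) * f t / (LINT s|lborel. (if 0 < s then s powr (-\<theta>) * f s else 0)) else 0))"

definition gamma_law :: "real \<Rightarrow> real measure" where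
  "gamma_law a = density lborel (\<lambda>x. ennreal (if 0 < x then x powr (a - 1) * exp (-x) / Gamma a else 0))"

text \<open>Beta(a,b); by convention Beta(a,0) is the point mass at 1.\<close>
definition beta_law :: "real \<Rightarrow> real \<Rightarrow> real measure" where
  "beta_law a b = (if b = 0 then return borel 1 else
     density lborel (\<lambda>x. ennreal (if 0 < x \<and> x < 1 then x powr (a - 1) * (1 - x) powr (b - 1) / Beta a b else 0)))"

definition ratio_law :: "real measure \<Rightarrow> real measure \<Rightarrow> real measure" where
  "ratio_law M N = distr (M \<Otimes>\<^sub>M N) borel (\<lambda>z. fst z / snd z)"

definition prod_law :: "real measure \<Rightarrow> real measure \<Rightarrow> real measure" where
  "prod_law M N = distr (M \<Otimes>\<^sub>M N) borel (\<lambda>z. fst z * snd z)"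

definition pow_law :: "real measure \<Rightarrow> real \<Rightarrow> real measure" where
  "pow_law M p = distr M borel (\<lambda>x. x powr p)"

definition X_law :: "(real \<Rightarrow> real) \<Rightarrow> real \<Rightarrow> real measure" where
  "X_law f \<theta> = ratio_law (stable_law f) (tilted_stable_law f \<theta>)"

definition chi_law :: "real \<Rightarrow> (real \<Rightarrow> real) \<Rightarrow> real \<Rightarrow> real measure" where
  "chi_law \<alpha> f \<theta> = prod_law (pow_law (gamma_law (\<theta> / \<alpha>)) (1 / \<alpha>)) (stable_law f)"

definition X_sigma_law :: "(real \<Rightarrow> real) \<Rightarrow> real \<Rightarrow> real measure" where
  "X_sigma_law f \<sigma> = prod_law (beta_law \<sigma> (1 - \<sigma>)) (X_law f \<sigma>)"

definition W_law :: "real \<Rightarrow> real \<Rightarrow> real measure" where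
  "W_law \<alpha> \<theta> = distr (uniform_measure lborel {0..1}) borel
      (\<lambda>u. (u powr (\<alpha> / \<theta>) / (1 - u powr (\<alpha> / \<theta>))) powr (1 / \<alpha>))"

end

theory Submission
  imports Defs
begin

text \<open>All laws in (i) are laws of positive random variables with distribution function
  \<open>y^\<theta> (1 + y^\<alpha>)^(-\<theta>/\<alpha>) = (1 + y^(-\<alpha>))^(-\<theta>/\<alpha>)\<close>. For \<open>W\<close> this is a direct computation,
  for the density it is the fundamental theorem of calculus. For the other laws, dividing by an
  independent \<open>\<gamma>\<^sub>1\<close> turns distribution functions into Laplace transforms,
  \<open>P(Z / \<gamma>\<^sub>1 \<le> y) = E exp(-Z/y)\<close>, and the three transforms \<open>E exp(-\<lambda>^\<alpha> \<gamma>\<^sub>\<theta>\<^sub>/\<^sub>\<alpha>)\<close>,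
  \<open>E exp(-\<lambda> \<chi>\<^sub>\<alpha>\<^sub>,\<^sub>\<theta>)\<close> and \<open>E exp(-\<lambda> \<gamma>\<^sub>\<theta> X\<^sub>\<alpha>\<^sub>,\<^sub>\<theta>)\<close> all equal \<open>(1 + \<lambda>^\<alpha>)^(-\<theta>/\<alpha>)\<close>.

  Part (ii) reduces to (i): \<open>1 - E exp(-\<lambda> \<Sigma>) = P(\<gamma>\<^sub>1' / \<Sigma> \<le> \<lambda>)\<close>, and
  \<open>\<gamma>\<^sub>1' / \<Sigma> = \<gamma>\<^sub>1' \<beta>\<^sub>\<sigma>\<^sub>,\<^sub>1\<^sub>-\<^sub>\<sigma> X\<^sub>\<alpha>\<^sub>,\<^sub>\<sigma> / \<gamma>\<^sub>1\<close> has the law of \<open>\<gamma>\<^sub>\<sigma> X\<^sub>\<alpha>\<^sub>,\<^sub>\<sigma> / \<gamma>\<^sub>1\<close>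
  by the beta-gamma algebra \<open>\<gamma>\<^sub>1 \<beta>\<^sub>\<sigma>\<^sub>,\<^sub>1\<^sub>-\<^sub>\<sigma> = \<gamma>\<^sub>\<sigma>\<close>.\<close>

section \<open>Integrals over the half-line\<close>

lemma powr_le_powr_iff:
  fixes a b r :: real
  assumes "0 < r" "0 \<le> a" "0 \<le> b"
  shows "a powr r \<le> b powr r \<longleftrightarrow> a \<le> b"
  using assms powr_mono2[of r a b] powr_less_mono2[of r b a] by (auto simp: not_le[symmetric])

lemma UN_inverse_nat_atLeastAtMost: "(\<Union>m. {1 / real (m + 2) .. real (m + 2)}) = {0<..}"
proof (intro antisym subsetI)
  fix u :: real assume "u \<in> {0<..}"
  then have u: "0 < u" by simp
  obtain n :: nat where "max u (1 / u) \<le> real n" using real_arch_simple by blast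
  then have "u \<in> {1 / real (n + 2) .. real (n + 2)}" using u by (auto simp: field_simps)
  then show "u \<in> (\<Union>m. {1 / real (m + 2) .. real (m + 2)})" by blast
qed (auto intro: less_le_trans[rotated])

lemma nn_integral_powr_substitution:
  fixes h :: "real \<Rightarrow> ennreal"
  assumes p: "0 < p" and [measurable]: "h \<in> borel_measurable borel"
  shows "(\<integral>\<^sup>+x. h x * indicator {0<..} x \<partial>lborel)
    = (\<integral>\<^sup>+u. h (u powr p) * ennreal (p * u powr (p - 1)) * indicator {0<..} u \<partial>lborel)"
proof -
  define J where "J m = {1 / real (m + 2) .. real (m + 2)}" for m :: nat
  define I where "I m = {(1 / real (m + 2)) powr p .. real (m + 2) powr p}" for m :: nat
  have I_iff_J: "x \<in> I m \<longleftrightarrow> x powr (1 / p) \<in> J m" if "0 < x" for x m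
    using that p powr_le_powr_iff[of "1 / p" "(1 / real (m + 2)) powr p" x]
      powr_le_powr_iff[of "1 / p" x "real (m + 2) powr p"]
    by (simp add: I_def J_def powr_powr)
  have "incseq J"
    by (rule incseq_SucI) (auto simp: J_def frac_le)
  moreover have "incseq I"
    using p by (intro incseq_SucI) (auto simp: I_def frac_le intro!: powr_mono2)
  moreover have UJ: "(\<Union>m. J m) = {0<..}"
    unfolding J_def by (rule UN_inverse_nat_atLeastAtMost)
  moreover have "(\<Union>m. I m) = {0<..}"
  proof (intro antisym subsetI)
    fix x :: real assume "x \<in> {0<..}"
    then have "0 < x" by simp
    then have "x powr (1 / p) \<in> (\<Union>m. J m)" unfolding UJ by simp
    then obtain m where "x powr (1 / p) \<in> J m" by blast
    then show "x \<in> (\<Union>m. I m)" using I_iff_J \<open>0 < x\<close> by blast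
  next
    fix x assume "x \<in> (\<Union>m. I m)"
    then obtain m where "x \<in> I m" by blast
    then show "x \<in> {0<..}" by (auto simp: I_def intro: less_le_trans[rotated])
  qed
  moreover have "emeasure (density lborel h) (I m)
      = emeasure (density lborel (\<lambda>u. h (u powr p) * ennreal (p * u powr (p - 1)))) (J m)" for m
  proof -
    have "1 / real (m + 2) < 1" "1 < real (m + 2)" by simp_all
    then have bounds: "1 / real (m + 2) < real (m + 2)" by linarith
    have "(\<integral>\<^sup>+x. h x * indicator {(1 / real (m + 2)) powr p .. real (m + 2) powr p} x \<partial>lborel)
        = (\<integral>\<^sup>+u. h (u powr p) * ennreal (p * u powr (p - 1)) * indicator {1 / real (m + 2) .. real (m + 2)} u \<partial>lborel)"
      using p by (intro nn_integral_substitution_aux)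
        (use bounds in \<open>auto intro!: derivative_eq_intros continuous_intros intro: less_le_trans[rotated]\<close>)
    then show ?thesis by (simp add: emeasure_density I_def J_def mult.assoc)
  qed
  ultimately have "emeasure (density lborel h) {0<..}
      = emeasure (density lborel (\<lambda>u. h (u powr p) * ennreal (p * u powr (p - 1)))) {0<..}"
    by (metis (no_types, lifting) SUP_emeasure_incseq SUP_cong sets_density sets_lborel borel_closed
        closed_atLeastAtMost I_def J_def image_subset_iff)
  then show ?thesis by (simp add: emeasure_density)
qed

lemma nn_integral_powr_exp:
  fixes a b :: real
  assumes a: "0 < a" and b: "0 < b"
  shows "(\<integral>\<^sup>+x. ennreal (if 0 < x then x powr (a - 1) * exp (-(b * x)) else 0) \<partial>lborel)
    = ennreal (Gamma a / b powr a)"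
proof -
  have pointwise: "ennreal (if 0 < 0 + 1 / b * x then (0 + 1 / b * x) powr (a - 1) * exp (-(b * (0 + 1 / b * x))) else 0)
      = ennreal (b powr (1 - a)) * ennreal (indicator {0..} x * x powr (a - 1) / exp x)" for x
  proof (cases "0 < x")
    case True
    have "(x / b) powr (a - 1) = b powr (1 - a) * x powr (a - 1)"
      using b True by (simp add: powr_divide powr_diff field_simps)
    then show ?thesis using True b by (simp add: ennreal_mult'[symmetric] exp_minus field_simps)
  qed (use b in \<open>auto simp: indicator_def zero_less_divide_iff\<close>)
  have "(\<integral>\<^sup>+x. ennreal (if 0 < x then x powr (a - 1) * exp (-(b * x)) else 0) \<partial>lborel)
      = ennreal (1 / b) * (\<integral>\<^sup>+x. ennreal (if 0 < 0 + 1 / b * x then (0 + 1 / b * x) powr (a - 1) * exp (-(b * (0 + 1 / b * x))) else 0) \<partial>lborel)"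
    using b by (subst nn_integral_real_affine[where c="1 / b" and t=0]) auto
  also have "\<dots> = ennreal (1 / b) * (\<integral>\<^sup>+x. ennreal (b powr (1 - a)) * ennreal (indicator {0..} x * x powr (a - 1) / exp x) \<partial>lborel)"
    unfolding pointwise ..
  also have "\<dots> = ennreal (1 / b) * (ennreal (b powr (1 - a)) * ennreal (Gamma a))"
    using a by (subst nn_integral_cmult) (simp_all add: Gamma_conv_nn_integral_real)
  also have "\<dots> = ennreal (Gamma a / b powr a)"
    using a b Gamma_real_pos[OF a] by (simp add: ennreal_mult'[symmetric] powr_diff field_simps)
  finally show ?thesis .
qed

lemma nn_integral_powr_exp_powr:
  assumes \<theta>: "0 < \<theta>" and \<alpha>: "0 < \<alpha>" and c: "0 < c"
  shows "(\<integral>\<^sup>+x. ennreal (if 0 < x then x powr (\<theta> - 1) * exp (-(c * x powr \<alpha>)) else 0) \<partial>lborel)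
    = ennreal (Gamma (\<theta> / \<alpha>) / (\<alpha> * c powr (\<theta> / \<alpha>)))"
proof -
  have pointwise: "ennreal ((u powr (1 / \<alpha>)) powr (\<theta> - 1) * exp (-(c * (u powr (1 / \<alpha>)) powr \<alpha>)))
        * ennreal (1 / \<alpha> * u powr (1 / \<alpha> - 1)) * indicator {0<..} u
      = ennreal (1 / \<alpha>) * ennreal (if 0 < u then u powr (\<theta> / \<alpha> - 1) * exp (-(c * u)) else 0)" for u
  proof (cases "0 < u")
    case True
    have "(u powr (1 / \<alpha>)) powr (\<theta> - 1) * u powr (1 / \<alpha> - 1) = u powr (\<theta> / \<alpha> - 1)"
      using \<alpha> by (simp add: powr_powr powr_add[symmetric] diff_divide_distrib add_divide_distrib)
    then show ?thesis
      using True \<alpha> by (simp add: powr_powr ennreal_mult'[symmetric] mult_ac)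
  qed simp
  have "(\<integral>\<^sup>+x. ennreal (if 0 < x then x powr (\<theta> - 1) * exp (-(c * x powr \<alpha>)) else 0) \<partial>lborel)
      = (\<integral>\<^sup>+x. ennreal (x powr (\<theta> - 1) * exp (-(c * x powr \<alpha>))) * indicator {0<..} x \<partial>lborel)"
    by (intro nn_integral_cong) (simp split: split_indicator)
  also have "\<dots> = (\<integral>\<^sup>+u. ennreal ((u powr (1 / \<alpha>)) powr (\<theta> - 1) * exp (-(c * (u powr (1 / \<alpha>)) powr \<alpha>)))
        * ennreal (1 / \<alpha> * u powr (1 / \<alpha> - 1)) * indicator {0<..} u \<partial>lborel)"
    using \<alpha> by (intro nn_integral_powr_substitution) simp_all
  also have "\<dots> = (\<integral>\<^sup>+u. ennreal (1 / \<alpha>) * ennreal (if 0 < u then u powr (\<theta> / \<alpha> - 1) * exp (-(c * u)) else 0) \<partial>lborel)"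
    unfolding pointwise ..
  also have "\<dots> = ennreal (1 / \<alpha>) * ennreal (Gamma (\<theta> / \<alpha>) / c powr (\<theta> / \<alpha>))"
    using \<theta> \<alpha> c by (simp add: nn_integral_cmult nn_integral_powr_exp)
  also have "\<dots> = ennreal (Gamma (\<theta> / \<alpha>) / (\<alpha> * c powr (\<theta> / \<alpha>)))"
    using \<alpha> by (simp add: ennreal_mult'[symmetric])
  finally show ?thesis .
qed

lemma nn_integral_FTC_greaterThanLessThan:
  fixes F w :: "real \<Rightarrow> real"
  assumes "a < b" and F: "\<And>x. a < x \<Longrightarrow> x < b \<Longrightarrow> (F has_real_derivative w x) (at x)"
    and w: "\<And>x. a < x \<Longrightarrow> x < b \<Longrightarrow> isCont w x" "\<And>x. a < x \<Longrightarrow> x < b \<Longrightarrow> 0 \<le> w x"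
    and lim_a: "(F \<longlongrightarrow> A) (at_right a)" and lim_b: "(F \<longlongrightarrow> B) (at_left b)"
  shows "(\<integral>\<^sup>+x. ennreal (w x) * indicator {a<..<b} x \<partial>lborel) = ennreal (B - A)"
proof -
  have "((F \<circ> real_of_ereal) \<longlongrightarrow> A) (at_right (ereal a))" "((F \<circ> real_of_ereal) \<longlongrightarrow> B) (at_left (ereal b))"
    unfolding ereal_tendsto_simps by (fact lim_a lim_b)+
  then have FTC: "set_integrable lborel (einterval a b) w" "(LBINT x=a..b. w x) = B - A"
    using interval_integral_FTC_nonneg[of a b F w A B] assms(1) F w by auto
  have "(\<integral>\<^sup>+x. ennreal (w x) * indicator {a<..<b} x \<partial>lborel) = (\<integral>\<^sup>+x. ennreal (indicator {a<..<b} x *\<^sub>R w x) \<partial>lborel)"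
    by (intro nn_integral_cong) (simp split: split_indicator)
  also have "\<dots> = ennreal (\<integral>x. indicator {a<..<b} x *\<^sub>R w x \<partial>lborel)"
    using FTC(1) w(2) by (intro nn_integral_eq_integral) (auto simp: set_integrable_def split: split_indicator)
  also have "(\<integral>x. indicator {a<..<b} x *\<^sub>R w x \<partial>lborel) = B - A"
    using FTC(2) assms(1) by (simp add: interval_lebesgue_integral_def set_lebesgue_integral_def)
  finally show ?thesis .
qed

section \<open>Laws of real random variables\<close>

lemma emeasure_atMost_nonpos_eq_0:
  fixes M :: "real measure"
  assumes "sets M = sets borel" "AE x in M. 0 < x" "y \<le> 0"
  shows "emeasure M {..y} = 0"
proof -
  have "emeasure M {x \<in> space M. x \<le> y} = 0"
    using assms(2,3) by (intro emeasure_eq_0_AE) (auto elim!: eventually_mono)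
  moreover have "space M = UNIV" using sets_eq_imp_space_eq[OF assms(1)] by simp
  ultimately show ?thesis by (simp add: atMost_def)
qed

lemma measure_eqI_atMost_pos:
  fixes M N :: "real measure"
  assumes sets: "sets M = sets borel" "sets N = sets borel"
    and pos: "AE x in M. 0 < x" "AE x in N. 0 < x"
    and eq: "\<And>y. 0 < y \<Longrightarrow> emeasure M {..y} = emeasure N {..y}"
    and fin: "\<And>y. emeasure M {..y} \<noteq> \<infinity>"
  shows "M = N"
proof (rule measure_eqI_generator_eq[where \<Omega>=UNIV and E="range atMost" and A="\<lambda>i. {..real i}"])
  show "Int_stable (range atMost :: real set set)"
    by (auto simp: Int_stable_def intro!: image_eqI[where x="min _ _"])
  show "sets M = sigma_sets UNIV (range atMost)" "sets N = sigma_sets UNIV (range atMost)"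
    using sets by (simp_all add: borel_eq_atMost)
  show "(\<Union>i. {..real i}) = UNIV" by (auto intro: real_arch_simple)
  show "emeasure M {..real i} \<noteq> \<infinity>" for i by (rule fin)
  show "emeasure M X = emeasure N X" if X: "X \<in> range atMost" for X
  proof -
    obtain y where "X = {..y}" using X by blast
    then show ?thesis
      using eq[of y] emeasure_atMost_nonpos_eq_0[OF sets(1) pos(1), of y]
        emeasure_atMost_nonpos_eq_0[OF sets(2) pos(2), of y] by (cases "0 < y") auto
  qed
qed auto

lemma measure_eqI_nn_integral:
  assumes "sets M = sets borel" "sets N = sets borel"
    and "\<And>h. h \<in> borel_measurable borel \<Longrightarrow> (\<integral>\<^sup>+x. h x \<partial>M) = (\<integral>\<^sup>+x. h x \<partial>N)"
  shows "M = N"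
proof (rule measure_eqI)
  fix A assume "A \<in> sets M"
  then have A: "A \<in> sets borel" using assms(1) by simp
  have "(\<integral>\<^sup>+x. indicator A x \<partial>M) = (\<integral>\<^sup>+x. indicator A x \<partial>N)"
    using A by (intro assms(3)) simp
  then show "emeasure M A = emeasure N A"
    using A assms(1,2) by simp
qed (use assms in simp)

lemma real_distribution_sigma_finite: "real_distribution M \<Longrightarrow> sigma_finite_measure M"
  by (intro prob_space_imp_sigma_finite real_distribution.axioms)

lemma real_distributionI:
  "sets M = sets borel \<Longrightarrow> emeasure M (space M) = 1 \<Longrightarrow> real_distribution M"
  by (intro real_distribution.intro prob_spaceI real_distribution_axioms.intro)

lemma real_distribution_density_lborel:
  fixes g :: "real \<Rightarrow> ennreal"
  assumes [measurable]: "g \<in> borel_measurable borel" and "(\<integral>\<^sup>+x. g x \<partial>lborel) = 1"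
  shows "real_distribution (density lborel g)"
  by (rule real_distributionI) (simp_all add: emeasure_density assms)

lemma AE_density_lborel_pos:
  fixes g :: "real \<Rightarrow> ennreal"
  assumes [measurable]: "g \<in> borel_measurable borel" and "\<And>x. x \<le> 0 \<Longrightarrow> g x = 0"
  shows "AE x in density lborel g. 0 < x"
proof (subst AE_density)
  show "AE x in lborel. 0 < g x \<longrightarrow> 0 < x"
    using assms(2) by (intro AE_I2 impI) (metis linorder_not_less order_less_irrefl)
qed simp

lemma integral_eq_1_minus_nn_integral:
  assumes M: "prob_space M" and [measurable]: "g \<in> borel_measurable M"
    and g: "AE x in M. 0 \<le> g x \<and> g x \<le> 1"
    and c: "(\<integral>\<^sup>+x. ennreal (1 - g x) \<partial>M) = ennreal c" "0 \<le> c"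
  shows "(\<integral>x. g x \<partial>M) = 1 - c"
proof -
  interpret prob_space M by (fact M)
  have "AE x in M. norm (g x) \<le> 1"
    using g by eventually_elim auto
  then have int: "integrable M g"
    by (intro integrable_const_bound[where B=1]) simp_all
  have "ennreal (\<integral>x. 1 - g x \<partial>M) = ennreal c"
    using int g c(1) by (subst nn_integral_eq_integral[symmetric]) (auto elim!: eventually_mono)
  moreover have "0 \<le> (\<integral>x. 1 - g x \<partial>M)"
    using g by (intro integral_nonneg_AE) (auto elim!: eventually_mono)
  ultimately have "(\<integral>x. 1 - g x \<partial>M) = c" using c(2) by simp
  then show ?thesis using int by (simp add: prob_space)
qed

lemma sets_laws [simp]:
  "sets (ratio_law M N) = sets borel" "sets (prod_law M N) = sets borel" "sets (pow_law M p) = sets borel"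
  by (simp_all add: ratio_law_def prod_law_def pow_law_def)

lemma measurable_laws [simp]:
  "measurable (ratio_law M N) K = measurable borel K"
  "measurable (prod_law M N) K = measurable borel K"
  "measurable (pow_law M p) K = measurable borel K"
  by (simp_all cong: measurable_cong_sets)

lemma borel_measurable_nn_integral_param:
  assumes "real_distribution N" and "(\<lambda>z. F (fst z) (snd z)) \<in> borel_measurable (borel \<Otimes>\<^sub>M borel)"
  shows "(\<lambda>x. \<integral>\<^sup>+y. F x y \<partial>N) \<in> borel_measurable borel"
proof -
  interpret real_distribution N by fact
  have "case_prod F \<in> borel_measurable (borel \<Otimes>\<^sub>M N)"
    using assms(2) measurable_cong_sets[OF sets_pair_measure_cong[OF refl events_eq_borel] refl]
    by (simp add: split_beta')
  then show ?thesis by (rule borel_measurable_nn_integral)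
qed

lemma nn_integral_swap_borel:
  assumes "sigma_finite_measure M" "sigma_finite_measure N" "sets M = sets borel" "sets N = sets borel"
    and "(\<lambda>z. F (fst z) (snd z)) \<in> borel_measurable (borel \<Otimes>\<^sub>M borel)"
  shows "(\<integral>\<^sup>+x. \<integral>\<^sup>+y. F x y \<partial>N \<partial>M) = (\<integral>\<^sup>+y. \<integral>\<^sup>+x. F x y \<partial>M \<partial>N)"
proof -
  interpret pair_sigma_finite M N using assms(1,2) by (simp add: pair_sigma_finite_def)
  have "case_prod F \<in> borel_measurable (M \<Otimes>\<^sub>M N)"
    unfolding split_beta' measurable_cong_sets[OF sets_pair_measure_cong[OF assms(3,4)] refl]
    by (rule assms(5))
  then show ?thesis by (rule Fubini'[symmetric])
qed

context
  fixes M N :: "real measure" and op :: "real \<Rightarrow> real \<Rightarrow> real"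
  assumes M: "real_distribution M" and N: "real_distribution N"
    and op [measurable]: "(\<lambda>z. op (fst z) (snd z)) \<in> borel_measurable (borel \<Otimes>\<^sub>M borel)"
begin

interpretation M: real_distribution M by (fact M)

interpretation N: real_distribution N by (fact N)

interpretation pair_sigma_finite M N
  by (simp add: pair_sigma_finite_def M.sigma_finite_measure_axioms N.sigma_finite_measure_axioms)

lemma measurable_pair_op: "(\<lambda>z. op (fst z) (snd z)) \<in> borel_measurable (M \<Otimes>\<^sub>M N)"
  by (simp cong: measurable_cong_sets add: sets_pair_measure_cong[OF M.events_eq_borel N.events_eq_borel])

lemma real_distribution_distr_pair_op:
  "real_distribution (distr (M \<Otimes>\<^sub>M N) borel (\<lambda>z. op (fst z) (snd z)))"
  by (intro real_distribution.intro real_distribution_axioms.intro prob_space.prob_space_distr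
      prob_space_pair M.prob_space_axioms N.prob_space_axioms measurable_pair_op) auto

lemma nn_integral_distr_pair_op:
  assumes [measurable]: "h \<in> borel_measurable borel"
  shows "(\<integral>\<^sup>+z. h z \<partial>distr (M \<Otimes>\<^sub>M N) borel (\<lambda>z. op (fst z) (snd z))) = (\<integral>\<^sup>+x. \<integral>\<^sup>+y. h (op x y) \<partial>N \<partial>M)"
  using measurable_pair_op by (simp add: nn_integral_distr N.nn_integral_fst[symmetric])

lemma nn_integral_distr_pair_op_swap:
  assumes [measurable]: "h \<in> borel_measurable borel"
  shows "(\<integral>\<^sup>+z. h z \<partial>distr (M \<Otimes>\<^sub>M N) borel (\<lambda>z. op (fst z) (snd z))) = (\<integral>\<^sup>+y. \<integral>\<^sup>+x. h (op x y) \<partial>M \<partial>N)"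
  using measurable_pair_op by (simp add: nn_integral_distr nn_integral_snd[symmetric])

lemma AE_distr_pair_op_pos:
  assumes "AE x in M. 0 < x" "AE y in N. 0 < y" "\<And>x y. 0 < x \<Longrightarrow> 0 < y \<Longrightarrow> 0 < op x y"
  shows "AE z in distr (M \<Otimes>\<^sub>M N) borel (\<lambda>z. op (fst z) (snd z)). 0 < z"
proof -
  have "AE z in M \<Otimes>\<^sub>M N. 0 < op (fst z) (snd z)"
  proof (rule AE_pair_measure)
    show "{z \<in> space (M \<Otimes>\<^sub>M N). 0 < op (fst z) (snd z)} \<in> sets (M \<Otimes>\<^sub>M N)"
      using measurable_pair_op by measurable
    show "AE x in M. AE y in N. 0 < op (fst (x, y)) (snd (x, y))"
      using assms(1) by eventually_elim (use assms(2,3) in \<open>auto elim!: eventually_mono\<close>)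
  qed
  then show ?thesis using measurable_pair_op by (subst AE_distr_iff) auto
qed

end

lemma
  assumes "real_distribution M" "real_distribution N"
  shows real_distribution_ratio_law: "real_distribution (ratio_law M N)"
    and real_distribution_prod_law: "real_distribution (prod_law M N)"
  using assms unfolding ratio_law_def prod_law_def by (auto intro!: real_distribution_distr_pair_op)

lemma
  assumes "real_distribution M" "real_distribution N" and [measurable]: "h \<in> borel_measurable borel"
  shows nn_integral_ratio_law: "(\<integral>\<^sup>+z. h z \<partial>ratio_law M N) = (\<integral>\<^sup>+x. \<integral>\<^sup>+y. h (x / y) \<partial>N \<partial>M)"
    and nn_integral_ratio_law_swap: "(\<integral>\<^sup>+z. h z \<partial>ratio_law M N) = (\<integral>\<^sup>+y. \<integral>\<^sup>+x. h (x / y) \<partial>M \<partial>N)"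
    and nn_integral_prod_law: "(\<integral>\<^sup>+z. h z \<partial>prod_law M N) = (\<integral>\<^sup>+x. \<integral>\<^sup>+y. h (x * y) \<partial>N \<partial>M)"
  using assms unfolding ratio_law_def prod_law_def
  by (auto intro!: nn_integral_distr_pair_op nn_integral_distr_pair_op_swap)

lemma
  assumes "real_distribution M" "real_distribution N" "AE x in M. 0 < x" "AE y in N. 0 < y"
  shows AE_ratio_law_pos: "AE z in ratio_law M N. 0 < z"
    and AE_prod_law_pos: "AE z in prod_law M N. 0 < z"
  using assms unfolding ratio_law_def prod_law_def by (auto intro!: AE_distr_pair_op_pos)

lemma nn_integral_pow_law:
  assumes "sets M = sets borel" and [measurable]: "h \<in> borel_measurable borel"
  shows "(\<integral>\<^sup>+z. h z \<partial>pow_law M p) = (\<integral>\<^sup>+x. h (x powr p) \<partial>M)"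
  using assms(1) unfolding pow_law_def by (subst nn_integral_distr) (simp_all cong: measurable_cong_sets)

lemma real_distribution_pow_law: "real_distribution M \<Longrightarrow> real_distribution (pow_law M p)"
  unfolding pow_law_def
  by (intro real_distribution.intro real_distribution_axioms.intro prob_space.prob_space_distr)
    (simp_all add: real_distribution.axioms(1) real_distribution.events_eq_borel cong: measurable_cong_sets)

lemma AE_pow_law_pos:
  assumes "sets M = sets borel" "AE x in M. 0 < x"
  shows "AE x in pow_law M p. 0 < x"
  using assms unfolding pow_law_def
  by (subst AE_distr_iff) (auto simp: elim!: eventually_mono cong: measurable_cong_sets)

lemma emeasure_pow_law_atMost:
  fixes M :: "real measure"
  assumes "sets M = sets borel" "AE x in M. 0 < x" and p: "0 < p" and y: "0 < y"
  shows "emeasure (pow_law M p) {..y} = emeasure M {..y powr (1 / p)}"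
proof -
  have [simp]: "space M = UNIV" using sets_eq_imp_space_eq[OF assms(1)] by simp
  have "emeasure (pow_law M p) {..y} = emeasure M {x. x powr p \<le> y}"
    using assms(1) unfolding pow_law_def
    by (subst emeasure_distr) (simp_all cong: measurable_cong_sets add: vimage_def atMost_def)
  also have "\<dots> = emeasure M {..y powr (1 / p)}"
  proof (rule emeasure_eq_AE)
    show "AE x in M. x \<in> {x. x powr p \<le> y} \<longleftrightarrow> x \<in> {..y powr (1 / p)}"
      using assms(2)
    proof eventually_elim
      case (elim x)
      have "x powr p \<le> y \<longleftrightarrow> (x powr p) powr (1 / p) \<le> y powr (1 / p)"
        using p y elim by (simp add: powr_le_powr_iff)
      then show ?case using p elim by (simp add: powr_powr)
    qed
  qed (use assms(1) in simp_all)
  finally show ?thesis .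
qed

context
  fixes M N K :: "real measure"
  assumes M: "real_distribution M" and N: "real_distribution N" and K: "real_distribution K"
begin

interpretation N: real_distribution N by (fact N)

interpretation K: real_distribution K by (fact K)

lemma prod_law_ratio_law: "prod_law (ratio_law M N) K = ratio_law (prod_law M K) N"
proof (rule measure_eqI_nn_integral)
  fix h :: "real \<Rightarrow> ennreal" assume [measurable]: "h \<in> borel_measurable borel"
  have [measurable]: "(\<lambda>u. \<integral>\<^sup>+k. h (u * k) \<partial>K) \<in> borel_measurable borel" "(\<lambda>v. \<integral>\<^sup>+y. h (v / y) \<partial>N) \<in> borel_measurable borel"
    using K N by (auto intro!: borel_measurable_nn_integral_param)
  have "(\<integral>\<^sup>+w. h w \<partial>prod_law (ratio_law M N) K) = (\<integral>\<^sup>+x. \<integral>\<^sup>+y. \<integral>\<^sup>+k. h (x / y * k) \<partial>K \<partial>N \<partial>M)"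
    using M N K by (simp add: nn_integral_prod_law nn_integral_ratio_law real_distribution_ratio_law)
  also have "\<dots> = (\<integral>\<^sup>+x. \<integral>\<^sup>+k. \<integral>\<^sup>+y. h (x / y * k) \<partial>N \<partial>K \<partial>M)"
    using N K by (intro nn_integral_cong nn_integral_swap_borel real_distribution_sigma_finite) auto
  also have "\<dots> = (\<integral>\<^sup>+w. h w \<partial>ratio_law (prod_law M K) N)"
    using M N K by (simp add: nn_integral_prod_law nn_integral_ratio_law real_distribution_prod_law)
  finally show "(\<integral>\<^sup>+w. h w \<partial>prod_law (ratio_law M N) K) = (\<integral>\<^sup>+w. h w \<partial>ratio_law (prod_law M K) N)" .
qed simp_all

lemma ratio_law_ratio_law: "ratio_law M (ratio_law N K) = ratio_law (prod_law M K) N"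
proof (rule measure_eqI_nn_integral)
  fix h :: "real \<Rightarrow> ennreal" assume [measurable]: "h \<in> borel_measurable borel"
  have [measurable]: "(\<lambda>u. \<integral>\<^sup>+v. h (u / v) \<partial>ratio_law N K) \<in> borel_measurable borel"
    "(\<lambda>v. \<integral>\<^sup>+y. h (v / y) \<partial>N) \<in> borel_measurable borel"
    using N K by (auto intro!: borel_measurable_nn_integral_param real_distribution_ratio_law)
  have "(\<integral>\<^sup>+w. h w \<partial>ratio_law M (ratio_law N K)) = (\<integral>\<^sup>+x. \<integral>\<^sup>+y. \<integral>\<^sup>+k. h (x / (y / k)) \<partial>K \<partial>N \<partial>M)"
    using M N K by (simp add: nn_integral_ratio_law real_distribution_ratio_law)
  also have "\<dots> = (\<integral>\<^sup>+x. \<integral>\<^sup>+k. \<integral>\<^sup>+y. h (x / (y / k)) \<partial>N \<partial>K \<partial>M)"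
    using N K by (intro nn_integral_cong nn_integral_swap_borel real_distribution_sigma_finite) auto
  also have "\<dots> = (\<integral>\<^sup>+w. h w \<partial>ratio_law (prod_law M K) N)"
    using M N K by (simp add: nn_integral_prod_law nn_integral_ratio_law real_distribution_prod_law)
  finally show "(\<integral>\<^sup>+w. h w \<partial>ratio_law M (ratio_law N K)) = (\<integral>\<^sup>+w. h w \<partial>ratio_law (prod_law M K) N)" .
qed simp_all

lemma prod_law_assoc: "prod_law M (prod_law N K) = prod_law (prod_law M N) K"
proof (rule measure_eqI_nn_integral)
  fix h :: "real \<Rightarrow> ennreal" assume [measurable]: "h \<in> borel_measurable borel"
  have [measurable]: "(\<lambda>u. \<integral>\<^sup>+v. h (u * v) \<partial>prod_law N K) \<in> borel_measurable borel"
    "(\<lambda>u. \<integral>\<^sup>+k. h (u * k) \<partial>K) \<in> borel_measurable borel"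
    using N K by (auto intro!: borel_measurable_nn_integral_param real_distribution_prod_law)
  have "(\<integral>\<^sup>+w. h w \<partial>prod_law M (prod_law N K)) = (\<integral>\<^sup>+x. \<integral>\<^sup>+y. \<integral>\<^sup>+k. h (x * (y * k)) \<partial>K \<partial>N \<partial>M)"
    using M N K by (simp add: nn_integral_prod_law real_distribution_prod_law)
  also have "\<dots> = (\<integral>\<^sup>+w. h w \<partial>prod_law (prod_law M N) K)"
    using M N K by (simp add: nn_integral_prod_law real_distribution_prod_law mult.assoc)
  finally show "(\<integral>\<^sup>+w. h w \<partial>prod_law M (prod_law N K)) = (\<integral>\<^sup>+w. h w \<partial>prod_law (prod_law M N) K)" .
qed simp_all

end

lemma emeasure_distr_uniform_atMost:
  fixes T :: "real \<Rightarrow> real"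
  assumes [measurable]: "T \<in> borel_measurable borel" and c: "0 \<le> c" "c \<le> 1"
    and T_iff: "\<And>u. 0 < u \<Longrightarrow> u < 1 \<Longrightarrow> T u \<le> y \<longleftrightarrow> u \<le> c"
  shows "emeasure (distr (uniform_measure lborel {0..1}) borel T) {..y} = ennreal c"
proof -
  have "T -` {..y} \<in> sets lborel"
    using measurable_sets_borel[OF assms(1), of "{..y}"] by simp
  then have "emeasure (distr (uniform_measure lborel {0..1}) borel T) {..y} = emeasure lborel ({0..1} \<inter> T -` {..y})"
    by (subst emeasure_distr) (simp_all add: divide_ennreal_def cong: measurable_cong_sets)
  also have "\<dots> = emeasure lborel {0..c}"
  proof (rule emeasure_eq_AE)
    show "AE u in lborel. u \<in> {0..1} \<inter> T -` {..y} \<longleftrightarrow> u \<in> {0..c}"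
      using AE_lborel_singleton[of 0] AE_lborel_singleton[of 1]
      by eventually_elim (use c T_iff in \<open>auto simp: less_le\<close>)
  qed simp_all
  also have "\<dots> = ennreal c" using c by simp
  finally show ?thesis .
qed

section \<open>Gamma and beta laws\<close>

definition gamma_density :: "real \<Rightarrow> real \<Rightarrow> real" where
  "gamma_density a x = (if 0 < x then x powr (a - 1) * exp (-x) / Gamma a else 0)"

lemma gamma_density_measurable [measurable]: "gamma_density a \<in> borel_measurable borel"
  unfolding gamma_density_def by measurable

lemma gamma_density_nonneg: "0 < a \<Longrightarrow> 0 \<le> gamma_density a x"
  using Gamma_real_pos[of a] by (simp add: gamma_density_def)

lemma gamma_law_eq_density: "gamma_law a = density lborel (\<lambda>x. ennreal (gamma_density a x))"
  by (simp add: gamma_law_def gamma_density_def)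

lemma sets_gamma_law [simp]: "sets (gamma_law a) = sets borel"
  by (simp add: gamma_law_def)

lemma nn_integral_gamma_law:
  assumes "h \<in> borel_measurable borel"
  shows "(\<integral>\<^sup>+x. h x \<partial>gamma_law a) = (\<integral>\<^sup>+x. ennreal (gamma_density a x) * h x \<partial>lborel)"
  using assms by (simp add: gamma_law_eq_density nn_integral_density)

lemma nn_integral_gamma_law_exp:
  assumes a: "0 < a" and \<mu>: "-1 < \<mu>"
  shows "(\<integral>\<^sup>+x. ennreal (exp (-(\<mu> * x))) \<partial>gamma_law a) = ennreal ((1 + \<mu>) powr (-a))"
proof -
  have G: "0 < Gamma a" using a by (rule Gamma_real_pos)
  have "(\<integral>\<^sup>+x. ennreal (exp (-(\<mu> * x))) \<partial>gamma_law a)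
      = (\<integral>\<^sup>+x. ennreal (1 / Gamma a) * ennreal (if 0 < x then x powr (a - 1) * exp (-((1 + \<mu>) * x)) else 0) \<partial>lborel)"
    using G by (auto simp: nn_integral_gamma_law gamma_density_def ennreal_mult'[symmetric]
        exp_add[symmetric] algebra_simps intro!: nn_integral_cong)
  also have "\<dots> = ennreal (1 / Gamma a) * ennreal (Gamma a / (1 + \<mu>) powr a)"
    using a \<mu> by (subst nn_integral_cmult) (simp_all add: nn_integral_powr_exp)
  also have "\<dots> = ennreal ((1 + \<mu>) powr (-a))"
    using G by (simp add: ennreal_mult'[symmetric] powr_minus field_simps)
  finally show ?thesis .
qed

lemma real_distribution_gamma_law: "0 < a \<Longrightarrow> real_distribution (gamma_law a)"
  using nn_integral_gamma_law_exp[of a 0] by (intro real_distributionI) simp_all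

lemma AE_gamma_law_pos: "AE x in gamma_law a. 0 < x"
  unfolding gamma_law_eq_density by (rule AE_density_lborel_pos) (auto simp: gamma_density_def)

lemma gamma_density_1: "gamma_density 1 x = (if 0 < x then exp (-x) else 0)"
  by (simp add: gamma_density_def)

lemma emeasure_gamma_law_1_atLeast:
  assumes "0 \<le> c"
  shows "emeasure (gamma_law 1) {c..} = ennreal (exp (-c))"
proof -
  have "emeasure (gamma_law 1) {c..} = (\<integral>\<^sup>+x. ennreal (exp (-x)) * indicator {c..} x \<partial>lborel)"
    using assms by (auto simp: gamma_law_eq_density emeasure_density gamma_density_1 indicator_def
        intro!: nn_integral_cong_AE eventually_mono[OF AE_lborel_singleton[of 0]])
  also have "\<dots> = 0 - (- exp (-c))"
  proof (rule nn_integral_FTC_atLeast)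
    show "((\<lambda>x::real. - exp (-x)) \<longlongrightarrow> 0) at_top"
      using tendsto_minus[OF filterlim_compose[OF exp_at_bot filterlim_uminus_at_bot_at_top]] by simp
  qed (auto intro!: derivative_eq_intros)
  finally show ?thesis by simp
qed

lemma emeasure_gamma_law_1_atMost:
  assumes "0 \<le> c"
  shows "emeasure (gamma_law 1) {..c} = ennreal (1 - exp (-c))"
proof -
  have "emeasure (gamma_law 1) {..c} = (\<integral>\<^sup>+x. ennreal (exp (-x)) * indicator {0..c} x \<partial>lborel)"
    using assms by (auto simp: gamma_law_eq_density emeasure_density gamma_density_1 indicator_def
        intro!: nn_integral_cong_AE eventually_mono[OF AE_lborel_singleton[of 0]])
  also have "\<dots> = (- exp (-c)) - (- exp (-0))"
    using assms by (intro nn_integral_FTC_Icc) (auto intro!: derivative_eq_intros)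
  finally show ?thesis by simp
qed

lemma nn_integral_gamma_law_divide:
  assumes a: "0 < a" and s: "0 < s" and [measurable]: "h \<in> borel_measurable borel"
  shows "ennreal (s powr (-a)) * (\<integral>\<^sup>+g. h (g / s) \<partial>gamma_law a)
    = (\<integral>\<^sup>+x. ennreal (if 0 < x then x powr (a - 1) / Gamma a else 0) * h x * ennreal (exp (-(x * s))) \<partial>lborel)"
proof -
  have "ennreal (s powr (-a)) * (\<integral>\<^sup>+g. h (g / s) \<partial>gamma_law a)
      = ennreal (s powr (-a)) * (ennreal s * (\<integral>\<^sup>+x. ennreal (gamma_density a (s * x)) * h x \<partial>lborel))"
    using s by (simp add: nn_integral_gamma_law) (subst nn_integral_real_affine[where c=s and t=0], simp_all)
  also have "\<dots> = (\<integral>\<^sup>+x. ennreal (s powr (-a)) * (ennreal s * (ennreal (gamma_density a (s * x)) * h x)) \<partial>lborel)"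
    by (simp add: nn_integral_cmult)
  also have "\<dots> = (\<integral>\<^sup>+x. ennreal (if 0 < x then x powr (a - 1) / Gamma a else 0) * h x * ennreal (exp (-(x * s))) \<partial>lborel)"
  proof (intro nn_integral_cong)
    fix x :: real
    have "ennreal (s powr (-a)) * (ennreal s * ennreal (gamma_density a (s * x)))
        = ennreal (if 0 < x then x powr (a - 1) / Gamma a else 0) * ennreal (exp (-(x * s)))"
    proof (cases "0 < x")
      case True
      have "s powr (-a) * (s * (s * x) powr (a - 1)) = x powr (a - 1)"
        using s True by (simp add: powr_mult powr_diff powr_minus field_simps)
      then have "s powr (-a) * (s * gamma_density a (s * x)) = x powr (a - 1) / Gamma a * exp (-(x * s))"
        using s True by (simp add: gamma_density_def mult_ac)
      then show ?thesis
        using s True Gamma_real_pos[OF a] gamma_density_nonneg[OF a, of "s * x"] by (simp add: ennreal_mult[symmetric])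
    qed (use s in \<open>simp add: gamma_density_def zero_less_mult_iff\<close>)
    then have "ennreal (s powr (-a)) * (ennreal s * ennreal (gamma_density a (s * x))) * h x
        = ennreal (if 0 < x then x powr (a - 1) / Gamma a else 0) * ennreal (exp (-(x * s))) * h x"
      by (rule arg_cong)
    then show "ennreal (s powr (-a)) * (ennreal s * (ennreal (gamma_density a (s * x)) * h x))
        = ennreal (if 0 < x then x powr (a - 1) / Gamma a else 0) * h x * ennreal (exp (-(x * s)))"
      by (simp only: mult_ac)
  qed
  finally show ?thesis .
qed

lemma emeasure_ratio_law_by_gamma_1_atMost:
  assumes M: "real_distribution M" "AE z in M. 0 < z" and y: "0 < y"
  shows "emeasure (ratio_law M (gamma_law 1)) {..y} = (\<integral>\<^sup>+z. ennreal (exp (-(z / y))) \<partial>M)"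
proof -
  have "emeasure (ratio_law M (gamma_law 1)) {..y} = (\<integral>\<^sup>+z. \<integral>\<^sup>+e. indicator {..y} (z / e) \<partial>gamma_law 1 \<partial>M)"
    using M by (simp add: nn_integral_indicator[symmetric] nn_integral_ratio_law real_distribution_gamma_law
        del: nn_integral_indicator)
  also have "\<dots> = (\<integral>\<^sup>+z. ennreal (exp (-(z / y))) \<partial>M)"
  proof (rule nn_integral_cong_AE)
    show "AE z in M. (\<integral>\<^sup>+e. indicator {..y} (z / e) \<partial>gamma_law 1) = ennreal (exp (-(z / y)))"
      using M(2)
    proof eventually_elim
      case (elim z)
      have "(\<integral>\<^sup>+e. indicator {..y} (z / e) \<partial>gamma_law 1) = (\<integral>\<^sup>+e. indicator {z / y..} e \<partial>gamma_law 1)"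
        using AE_gamma_law_pos
        by (rule nn_integral_cong_AE[OF eventually_mono]) (use elim y in \<open>auto simp: field_simps split: split_indicator\<close>)
      also have "\<dots> = ennreal (exp (-(z / y)))"
        using elim y by (simp add: emeasure_gamma_law_1_atLeast)
      finally show ?case .
    qed
  qed
  finally show ?thesis .
qed

lemma emeasure_ratio_law_of_gamma_1_atMost:
  assumes M: "real_distribution M" "AE z in M. 0 < z" and l: "0 \<le> l"
  shows "emeasure (ratio_law (gamma_law 1) M) {..l} = (\<integral>\<^sup>+z. ennreal (1 - exp (-(l * z))) \<partial>M)"
proof -
  have "emeasure (ratio_law (gamma_law 1) M) {..l} = (\<integral>\<^sup>+z. \<integral>\<^sup>+e. indicator {..l} (e / z) \<partial>gamma_law 1 \<partial>M)"
    using M by (simp add: nn_integral_indicator[symmetric] nn_integral_ratio_law_swap real_distribution_gamma_law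
        del: nn_integral_indicator)
  also have "\<dots> = (\<integral>\<^sup>+z. ennreal (1 - exp (-(l * z))) \<partial>M)"
  proof (rule nn_integral_cong_AE)
    show "AE z in M. (\<integral>\<^sup>+e. indicator {..l} (e / z) \<partial>gamma_law 1) = ennreal (1 - exp (-(l * z)))"
      using M(2)
    proof eventually_elim
      case (elim z)
      have "(\<integral>\<^sup>+e. indicator {..l} (e / z) \<partial>gamma_law 1) = (\<integral>\<^sup>+e. indicator {..l * z} e \<partial>gamma_law 1)"
        by (intro nn_integral_cong) (use elim in \<open>auto simp: field_simps split: split_indicator\<close>)
      also have "\<dots> = ennreal (1 - exp (-(l * z)))"
        using elim l by (simp add: emeasure_gamma_law_1_atMost)
      finally show ?case .
    qed
  qed
  finally show ?thesis .
qed

definition beta_density :: "real \<Rightarrow> real \<Rightarrow> real \<Rightarrow> real" where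
  "beta_density a b x = (if 0 < x \<and> x < 1 then x powr (a - 1) * (1 - x) powr (b - 1) / Beta a b else 0)"

lemma beta_density_measurable [measurable]: "beta_density a b \<in> borel_measurable borel"
  unfolding beta_density_def by measurable

lemma beta_law_eq_density: "b \<noteq> 0 \<Longrightarrow> beta_law a b = density lborel (\<lambda>x. ennreal (beta_density a b x))"
  by (simp add: beta_law_def beta_density_def)

lemma sets_beta_law [simp]: "sets (beta_law a b) = sets borel"
  by (simp add: beta_law_def)

lemma Beta_real_pos: "0 < a \<Longrightarrow> 0 < b \<Longrightarrow> 0 < Beta a (b :: real)"
  by (simp add: Beta_def Gamma_real_pos)

lemma real_distribution_beta_law:
  assumes a: "0 < a" and b: "0 \<le> b"
  shows "real_distribution (beta_law a b)"
proof (cases "b = 0")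
  case True
  then show ?thesis by (simp add: beta_law_def real_distributionI)
next
  case False
  then have b: "0 < b" using b by simp
  have "(\<integral>\<^sup>+x. ennreal (beta_density a b x) \<partial>lborel)
      = ennreal (1 / Beta a b) * (\<integral>\<^sup>+x. ennreal (x powr (a - 1) * (1 - x) powr (b - 1)) * indicator {0..1} x \<partial>lborel)"
    using Beta_real_pos[OF a b]
    by (subst nn_integral_cmult[symmetric]) (auto simp: beta_density_def indicator_def ennreal_mult'[symmetric]
        intro!: nn_integral_cong_AE eventually_mono[OF eventually_conj[OF AE_lborel_singleton[of 0] AE_lborel_singleton[of 1]]])
  also have "(\<integral>\<^sup>+x. ennreal (x powr (a - 1) * (1 - x) powr (b - 1)) * indicator {0..1} x \<partial>lborel) = ennreal (Beta a b)"
    using a b by (intro nn_integral_has_integral_lebesgue' has_integral_Beta_real) auto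
  also have "ennreal (1 / Beta a b) * ennreal (Beta a b) = 1"
    using Beta_real_pos[OF a b] by (simp add: ennreal_mult'[symmetric])
  finally show ?thesis
    using False by (simp add: beta_law_eq_density real_distribution_density_lborel)
qed

lemma AE_beta_law_pos: "AE x in beta_law a b. 0 < x"
proof (cases "b = 0")
  case False
  show ?thesis
    unfolding beta_law_eq_density[OF False] by (rule AE_density_lborel_pos) (auto simp: beta_density_def)
next
  case True
  have "{x \<in> space borel. 0 < x} \<in> sets (borel :: real measure)" by measurable
  then show ?thesis using True unfolding beta_law_def by (simp add: AE_return)
qed

lemma beta_gamma_density_convolution:
  assumes a: "0 < a" and b: "0 < b" and g: "0 < g"
  shows "(\<integral>\<^sup>+e. ennreal (gamma_density (a + b) e / e * beta_density a b (g / e)) \<partial>lborel) = ennreal (gamma_density a g)"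
proof -
  have B: "Beta a b = Gamma a * Gamma b / Gamma (a + b)"
    by (simp add: Beta_def)
  have pos: "0 < Gamma a" "0 < Gamma b" "0 < Gamma (a + b)"
    using a b by (auto intro!: Gamma_real_pos)
  define C where "C = exp (-g) * g powr (a - 1) / (Gamma (a + b) * Beta a b)"
  have C_nonneg: "0 \<le> C"
    using pos Beta_real_pos[OF a b] by (simp add: C_def)
  \<comment> \<open>after the shift \<open>e = g + v\<close> all powers of \<open>g + v\<close> cancel\<close>
  have pointwise: "gamma_density (a + b) (g + 1 * v) / (g + 1 * v) * beta_density a b (g / (g + 1 * v))
      = C * (if 0 < v then v powr (b - 1) * exp (-(1 * v)) else 0)" for v
  proof (cases "0 < v")
    case True
    define w where "w = g + v"
    have w: "0 < w" "g / w < 1" and one_minus: "1 - g / w = v / w"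
      using g True by (simp_all add: w_def field_simps)
    have "w powr (a + b - 1) = w powr ((a - 1) + (b - 1) + 1)"
      by (simp add: algebra_simps)
    also have "\<dots> = w powr (a - 1) * w powr (b - 1) * w"
      unfolding powr_add using w by simp
    finally have "w powr (a + b - 1) / w * (g / w) powr (a - 1) * (v / w) powr (b - 1)
        = g powr (a - 1) * v powr (b - 1)"
      using g w True by (simp add: powr_divide field_simps)
    moreover have "exp (-w) = exp (-g) * exp (-v)"
      by (simp add: w_def exp_add[symmetric])
    ultimately have "gamma_density (a + b) w / w * beta_density a b (g / w)
        = C * (v powr (b - 1) * exp (-v))"
      using g w True by (simp add: gamma_density_def beta_density_def C_def one_minus field_simps)
    then show ?thesis using True by (simp add: w_def)
  next
    case False
    then have "\<not> (0 < g / (g + v) \<and> g / (g + v) < 1)"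
      using g by (auto simp: field_simps zero_less_divide_iff)
    then have "beta_density a b (g / (g + 1 * v)) = 0"
      unfolding beta_density_def by auto
    then show ?thesis using False by simp
  qed
  have "(\<integral>\<^sup>+e. ennreal (gamma_density (a + b) e / e * beta_density a b (g / e)) \<partial>lborel)
      = (\<integral>\<^sup>+v. ennreal (C * (if 0 < v then v powr (b - 1) * exp (-(1 * v)) else 0)) \<partial>lborel)"
    by (subst nn_integral_real_affine[where c=1 and t=g]) (simp_all only: pointwise, simp_all)
  also have "\<dots> = ennreal C * (\<integral>\<^sup>+v. ennreal (if 0 < v then v powr (b - 1) * exp (-(1 * v)) else 0) \<partial>lborel)"
    using C_nonneg by (subst nn_integral_cmult[symmetric]) (auto simp: ennreal_mult' intro!: nn_integral_cong)
  also have "\<dots> = ennreal C * ennreal (Gamma b / 1 powr b)"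
    using b by (simp only: nn_integral_powr_exp zero_less_one)
  also have "\<dots> = ennreal (gamma_density a g)"
    using g pos by (simp add: ennreal_mult'[symmetric] C_def B gamma_density_def)
  finally show ?thesis .
qed

lemma nn_integral_beta_law_scaled:
  assumes b: "0 < b" and e: "0 < e" and [measurable]: "h \<in> borel_measurable borel"
  shows "(\<integral>\<^sup>+y. h (e * y) \<partial>beta_law a b) = (\<integral>\<^sup>+x. ennreal (beta_density a b (x / e) / e) * h x \<partial>lborel)"
proof -
  have "(\<integral>\<^sup>+y. h (e * y) \<partial>beta_law a b) = (\<integral>\<^sup>+y. ennreal (beta_density a b y) * h (e * y) \<partial>lborel)"
    using b by (simp add: beta_law_eq_density nn_integral_density)
  also have "\<dots> = ennreal (1 / e) * (\<integral>\<^sup>+x. ennreal (beta_density a b (x / e)) * h x \<partial>lborel)"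
    using e by (subst nn_integral_real_affine[where c="1 / e" and t=0]) simp_all
  also have "\<dots> = (\<integral>\<^sup>+x. ennreal (beta_density a b (x / e) / e) * h x \<partial>lborel)"
    using e by (subst nn_integral_cmult[symmetric]) (auto simp: ennreal_mult'[symmetric] mult.assoc[symmetric])
  finally show ?thesis .
qed

lemma nn_integral_gamma_beta_product:
  assumes a: "0 < a" and b: "0 < b" and [measurable]: "h \<in> borel_measurable borel"
  shows "(\<integral>\<^sup>+e. \<integral>\<^sup>+y. h (e * y) \<partial>beta_law a b \<partial>gamma_law (a + b)) = (\<integral>\<^sup>+x. h x \<partial>gamma_law a)"
proof -
  have "(\<lambda>e. \<integral>\<^sup>+y. h (e * y) \<partial>beta_law a b) \<in> borel_measurable borel"
    using a b by (intro borel_measurable_nn_integral_param real_distribution_beta_law) auto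
  then have "(\<integral>\<^sup>+e. \<integral>\<^sup>+y. h (e * y) \<partial>beta_law a b \<partial>gamma_law (a + b))
      = (\<integral>\<^sup>+e. ennreal (gamma_density (a + b) e) * \<integral>\<^sup>+y. h (e * y) \<partial>beta_law a b \<partial>lborel)"
    by (rule nn_integral_gamma_law)
  also have "\<dots> = (\<integral>\<^sup>+e. \<integral>\<^sup>+x. ennreal (gamma_density (a + b) e / e * beta_density a b (x / e)) * h x \<partial>lborel \<partial>lborel)"
  proof (intro nn_integral_cong)
    fix e :: real
    show "ennreal (gamma_density (a + b) e) * (\<integral>\<^sup>+y. h (e * y) \<partial>beta_law a b)
        = (\<integral>\<^sup>+x. ennreal (gamma_density (a + b) e / e * beta_density a b (x / e)) * h x \<partial>lborel)"
    proof (cases "0 < e")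
      case True
      then show ?thesis
        using b gamma_density_nonneg[of "a + b" e] a
        by (simp add: nn_integral_beta_law_scaled nn_integral_cmult[symmetric])
          (simp add: ennreal_mult' mult.assoc times_divide_eq_right[symmetric] del: times_divide_eq_right)
    qed (simp add: gamma_density_def)
  qed
  also have "\<dots> = (\<integral>\<^sup>+x. \<integral>\<^sup>+e. ennreal (gamma_density (a + b) e / e * beta_density a b (x / e)) * h x \<partial>lborel \<partial>lborel)"
    by (rule lborel_pair.Fubini') measurable
  also have "\<dots> = (\<integral>\<^sup>+x. ennreal (gamma_density a x) * h x \<partial>lborel)"
  proof (intro nn_integral_cong)
    fix x :: real
    have "(\<integral>\<^sup>+e. ennreal (gamma_density (a + b) e / e * beta_density a b (x / e)) \<partial>lborel) = ennreal (gamma_density a x)"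
    proof (cases "0 < x")
      case False
      then have zero: "gamma_density (a + b) e / e * beta_density a b (x / e) = 0" for e
        by (cases "0 < e") (auto simp: gamma_density_def beta_density_def zero_less_divide_iff)
      moreover have "gamma_density a x = 0" using False by (simp add: gamma_density_def)
      ultimately show ?thesis by (simp only: zero ennreal_0) simp
    qed (rule beta_gamma_density_convolution[OF a b])
    then show "(\<integral>\<^sup>+e. ennreal (gamma_density (a + b) e / e * beta_density a b (x / e)) * h x \<partial>lborel)
        = ennreal (gamma_density a x) * h x"
      by (simp add: nn_integral_multc)
  qed
  also have "\<dots> = (\<integral>\<^sup>+x. h x \<partial>gamma_law a)"
    by (simp add: nn_integral_gamma_law)
  finally show ?thesis .
qed

lemma prod_law_gamma_beta:
  assumes a: "0 < a" and b: "0 \<le> b"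
  shows "prod_law (gamma_law (a + b)) (beta_law a b) = gamma_law a"
proof (rule measure_eqI_nn_integral)
  fix h :: "real \<Rightarrow> ennreal" assume [measurable]: "h \<in> borel_measurable borel"
  have "(\<integral>\<^sup>+z. h z \<partial>prod_law (gamma_law (a + b)) (beta_law a b))
      = (\<integral>\<^sup>+e. \<integral>\<^sup>+y. h (e * y) \<partial>beta_law a b \<partial>gamma_law (a + b))"
    using a b by (intro nn_integral_prod_law real_distribution_gamma_law real_distribution_beta_law) auto
  also have "\<dots> = (\<integral>\<^sup>+x. h x \<partial>gamma_law a)"
    using a b nn_integral_gamma_beta_product[of a b h]
    by (cases "b = 0") (simp_all add: beta_law_def nn_integral_return)
  finally show "(\<integral>\<^sup>+z. h z \<partial>prod_law (gamma_law (a + b)) (beta_law a b)) = (\<integral>\<^sup>+x. h x \<partial>gamma_law a)" .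
qed simp_all

section \<open>The law of \<open>W\<close>\<close>

definition W_cdf :: "real \<Rightarrow> real \<Rightarrow> real \<Rightarrow> real" where
  "W_cdf \<alpha> \<theta> y = y powr \<theta> * (1 + y powr \<alpha>) powr (-\<theta> / \<alpha>)"

lemma W_cdf_nonneg: "0 \<le> W_cdf \<alpha> \<theta> y"
  by (simp add: W_cdf_def)

lemma W_cdf_eq_laplace:
  assumes "0 < \<alpha>" "0 < y"
  shows "W_cdf \<alpha> \<theta> y = (1 + (1 / y) powr \<alpha>) powr (-\<theta> / \<alpha>)"
proof -
  have "1 + (1 / y) powr \<alpha> = (1 + y powr \<alpha>) / y powr \<alpha>"
    using assms by (simp add: powr_divide field_simps)
  moreover have "(y powr \<alpha>) powr (-\<theta> / \<alpha>) = 1 / y powr \<theta>"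
    using assms by (simp add: powr_powr powr_minus_divide)
  ultimately show ?thesis
    using assms by (simp add: W_cdf_def powr_divide)
qed

lemma W_cdf_has_real_derivative:
  assumes \<alpha>: "0 < \<alpha>" and x: "0 < x"
  shows "(W_cdf \<alpha> \<theta> has_real_derivative \<theta> * x powr (\<theta> - 1) * (1 + x powr \<alpha>) powr (-(\<theta> + \<alpha>) / \<alpha>)) (at x)"
proof -
  define P where "P = (1 + x powr \<alpha>) powr (-(\<theta> + \<alpha>) / \<alpha>)"
  have u: "0 < 1 + x powr \<alpha>" by (simp add: add_pos_nonneg)
  have "(1 + x powr \<alpha>) powr (-\<theta> / \<alpha>) = (1 + x powr \<alpha>) powr (-(\<theta> + \<alpha>) / \<alpha> + 1)"
    using \<alpha> by (simp add: field_simps)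
  then have P1: "(1 + x powr \<alpha>) powr (-\<theta> / \<alpha>) = (1 + x powr \<alpha>) * P"
    using u by (simp add: P_def powr_add)
  have P2: "(1 + x powr \<alpha>) powr (-\<theta> / \<alpha> - 1) = P"
    unfolding P_def by (rule arg_cong[where f="\<lambda>e. (1 + x powr \<alpha>) powr e"]) (use \<alpha> in \<open>simp add: field_simps\<close>)
  have "x powr (\<alpha> - 1) * x powr \<theta> = x powr (\<theta> - 1) * x powr \<alpha>"
    using x by (simp add: powr_add[symmetric] algebra_simps)
  then have "\<theta> * x powr (\<theta> - 1) * (1 + x powr \<alpha>) powr (-\<theta> / \<alpha>)
      - \<theta> * ((1 + x powr \<alpha>) powr (-\<theta> / \<alpha> - 1) * x powr (\<alpha> - 1)) * x powr \<theta> = \<theta> * x powr (\<theta> - 1) * P"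
    unfolding P1 P2 by (simp add: algebra_simps)
  then show ?thesis
    unfolding W_cdf_def P_def using x u \<alpha> by (auto intro!: derivative_eq_intros simp: algebra_simps)
qed

lemma sets_W_law [simp]: "sets (W_law \<alpha> \<theta>) = sets borel"
  by (simp add: W_law_def)

lemma real_distribution_W_law: "real_distribution (W_law \<alpha> \<theta>)"
  unfolding W_law_def
  by (intro real_distribution.intro real_distribution_axioms.intro prob_space.prob_space_distr
      prob_space_uniform_measure) (simp_all cong: measurable_cong_sets)

lemma AE_W_law_pos:
  assumes "0 < \<alpha>" "0 < \<theta>"
  shows "AE x in W_law \<alpha> \<theta>. 0 < x"
proof -
  have "AE u in uniform_measure lborel {0..1}. 0 < (u powr (\<alpha> / \<theta>) / (1 - u powr (\<alpha> / \<theta>))) powr (1 / \<alpha>)"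
  proof (rule AE_uniform_measureI)
    show "AE u in lborel. u \<in> {0..1} \<longrightarrow> 0 < (u powr (\<alpha> / \<theta>) / (1 - u powr (\<alpha> / \<theta>))) powr (1 / \<alpha>)"
      using AE_lborel_singleton[of 0] AE_lborel_singleton[of 1]
    proof eventually_elim
      case (elim u)
      show ?case
      proof
        assume "u \<in> {0..1}"
        then have "0 < u" "u < 1" using elim by auto
        then have "u powr (\<alpha> / \<theta>) < 1 powr (\<alpha> / \<theta>)"
          using assms by (intro powr_less_mono2) auto
        then show "0 < (u powr (\<alpha> / \<theta>) / (1 - u powr (\<alpha> / \<theta>))) powr (1 / \<alpha>)"
          using \<open>0 < u\<close> by simp
      qed
    qed
  qed simp
  then show ?thesis
    unfolding W_law_def by (subst AE_distr_iff) (simp_all cong: measurable_cong_sets)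
qed

lemma emeasure_W_law_atMost:
  assumes \<alpha>: "0 < \<alpha>" and \<theta>: "0 < \<theta>" and y: "0 < y"
  shows "emeasure (W_law \<alpha> \<theta>) {..y} = ennreal (W_cdf \<alpha> \<theta> y)"
  unfolding W_law_def
proof (rule emeasure_distr_uniform_atMost)
  define Y where "Y = y powr \<alpha>"
  have Y: "0 < Y" using y by (simp add: Y_def)
  have "(Y / (1 + Y)) powr (\<theta> / \<alpha>) = Y powr (\<theta> / \<alpha>) / (1 + Y) powr (\<theta> / \<alpha>)"
    using Y by (simp add: powr_divide)
  also have "Y powr (\<theta> / \<alpha>) = y powr \<theta>"
    using y \<alpha> by (simp add: Y_def powr_powr)
  finally have cdf: "W_cdf \<alpha> \<theta> y = (Y / (1 + Y)) powr (\<theta> / \<alpha>)"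
    by (simp add: W_cdf_def Y_def powr_minus_divide)
  show "0 \<le> W_cdf \<alpha> \<theta> y" by (rule W_cdf_nonneg)
  show "W_cdf \<alpha> \<theta> y \<le> 1"
    unfolding cdf using Y \<alpha> \<theta> by (intro powr_le1) simp_all
  fix u :: real assume u: "0 < u" "u < 1"
  define v where "v = u powr (\<alpha> / \<theta>)"
  have v: "0 < v" "v < 1"
    using u \<alpha> \<theta> powr_less_mono2[of "\<alpha> / \<theta>" u 1] by (simp_all add: v_def)
  have "(v / (1 - v)) powr (1 / \<alpha>) \<le> y \<longleftrightarrow> (v / (1 - v)) powr (1 / \<alpha>) \<le> Y powr (1 / \<alpha>)"
    using y \<alpha> by (simp add: Y_def powr_powr)
  also have "\<dots> \<longleftrightarrow> v / (1 - v) \<le> Y"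
    using v Y \<alpha> by (intro powr_le_powr_iff) simp_all
  also have "\<dots> \<longleftrightarrow> v \<le> Y / (1 + Y)"
    using v Y by (simp add: field_simps)
  also have "\<dots> \<longleftrightarrow> v powr (\<theta> / \<alpha>) \<le> (Y / (1 + Y)) powr (\<theta> / \<alpha>)"
    using v Y \<alpha> \<theta> by (intro powr_le_powr_iff[symmetric]) (simp_all add: add_pos_nonneg)
  also have "v powr (\<theta> / \<alpha>) = u"
    using u \<alpha> \<theta> by (simp add: v_def powr_powr)
  finally show "(u powr (\<alpha> / \<theta>) / (1 - u powr (\<alpha> / \<theta>))) powr (1 / \<alpha>) \<le> y \<longleftrightarrow> u \<le> W_cdf \<alpha> \<theta> y"
    by (simp add: v_def cdf)
qed measurable

lemma emeasure_W_density_atMost: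
  assumes \<alpha>: "0 < \<alpha>" and \<theta>: "0 < \<theta>" and y: "0 < y"
  shows "emeasure (density lborel (\<lambda>x. ennreal (if 0 < x then
      \<theta> * x powr (\<theta> - 1) * (1 + x powr \<alpha>) powr (-(\<theta> + \<alpha>) / \<alpha>) else 0))) {..y} = ennreal (W_cdf \<alpha> \<theta> y)"
proof -
  define w where "w x = \<theta> * x powr (\<theta> - 1) * (1 + x powr \<alpha>) powr (-(\<theta> + \<alpha>) / \<alpha>)" for x
  have [measurable]: "w \<in> borel_measurable borel" unfolding w_def by measurable
  have "((\<lambda>x. x powr \<theta> * (1 + x powr \<alpha>) powr (-\<theta> / \<alpha>)) \<longlongrightarrow> 0 powr \<theta> * (1 + 0 powr \<alpha>) powr (-\<theta> / \<alpha>)) (at_right 0)"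
    using \<theta> \<alpha> eventually_at_right_less[of "0::real"]
    by (intro tendsto_intros) (auto elim!: eventually_mono)
  then have lim_0: "(W_cdf \<alpha> \<theta> \<longlongrightarrow> 0) (at_right 0)"
    using \<theta> by (simp add: W_cdf_def[abs_def])
  have lim_y: "(W_cdf \<alpha> \<theta> \<longlongrightarrow> W_cdf \<alpha> \<theta> y) (at_left y)"
    using DERIV_isCont[OF W_cdf_has_real_derivative[OF \<alpha> y]] unfolding isCont_def
    by (rule tendsto_mono[OF at_le, rotated]) simp
  have "emeasure (density lborel (\<lambda>x. ennreal (if 0 < x then
      \<theta> * x powr (\<theta> - 1) * (1 + x powr \<alpha>) powr (-(\<theta> + \<alpha>) / \<alpha>) else 0))) {..y}
      = (\<integral>\<^sup>+x. ennreal (w x) * indicator {0<..<y} x \<partial>lborel)"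
    by (subst emeasure_density)
      (auto simp: w_def split: split_indicator intro!: nn_integral_cong_AE eventually_mono[OF AE_lborel_singleton[of y]])
  also have "\<dots> = ennreal (W_cdf \<alpha> \<theta> y - 0)"
  proof (rule nn_integral_FTC_greaterThanLessThan[OF y _ _ _ lim_0 lim_y])
    show "(W_cdf \<alpha> \<theta> has_real_derivative w x) (at x)" if "0 < x" for x
      using W_cdf_has_real_derivative[OF \<alpha> that] by (simp add: w_def)
    show "isCont w x" if "0 < x" for x
    proof -
      have "0 < 1 + x powr \<alpha>" by (simp add: add_pos_nonneg)
      then show ?thesis unfolding w_def[abs_def] using that by (intro continuous_intros) auto
    qed
    show "0 \<le> w x" for x
      using \<theta> by (simp add: w_def)
  qed
  finally show ?thesis by simp
qed

lemma emeasure_pow_law_gamma_ratio_atMost: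
  assumes \<alpha>: "0 < \<alpha>" and \<theta>: "0 < \<theta>" and y: "0 < y"
  shows "emeasure (pow_law (ratio_law (gamma_law (\<theta> / \<alpha>)) (gamma_law 1)) (1 / \<alpha>)) {..y} = ennreal (W_cdf \<alpha> \<theta> y)"
proof -
  have G: "real_distribution (gamma_law (\<theta> / \<alpha>))" "real_distribution (gamma_law 1)"
    using \<alpha> \<theta> by (simp_all add: real_distribution_gamma_law)
  have "emeasure (pow_law (ratio_law (gamma_law (\<theta> / \<alpha>)) (gamma_law 1)) (1 / \<alpha>)) {..y}
      = emeasure (ratio_law (gamma_law (\<theta> / \<alpha>)) (gamma_law 1)) {..y powr \<alpha>}"
    using \<alpha> y G by (subst emeasure_pow_law_atMost) (simp_all add: AE_ratio_law_pos AE_gamma_law_pos)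
  also have "\<dots> = (\<integral>\<^sup>+g. ennreal (exp (-(g / y powr \<alpha>))) \<partial>gamma_law (\<theta> / \<alpha>))"
    using y G by (intro emeasure_ratio_law_by_gamma_1_atMost AE_gamma_law_pos) simp_all
  also have "\<dots> = (\<integral>\<^sup>+g. ennreal (exp (-((1 / y) powr \<alpha> * g))) \<partial>gamma_law (\<theta> / \<alpha>))"
    using y by (simp add: powr_divide)
  also have "\<dots> = ennreal (W_cdf \<alpha> \<theta> y)"
    using \<alpha> \<theta> y nn_integral_gamma_law_exp[of "\<theta> / \<alpha>" "(1 / y) powr \<alpha>"]
    by (simp add: W_cdf_eq_laplace less_le_trans[OF _ powr_ge_zero])
  finally show ?thesis .
qed

lemma W_law_eqI:
  assumes "0 < \<alpha>" "0 < \<theta>" and M: "sets M = sets borel" "AE x in M. 0 < x"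
    and cdf: "\<And>y. 0 < y \<Longrightarrow> emeasure M {..y} = ennreal (W_cdf \<alpha> \<theta> y)"
  shows "W_law \<alpha> \<theta> = M"
  using assms finite_measure.emeasure_finite[OF prob_space.axioms(1)[OF real_distribution.axioms(1)[OF real_distribution_W_law]]]
  by (intro measure_eqI_atMost_pos) (simp_all add: AE_W_law_pos emeasure_W_law_atMost)

lemma W_law_eq_density:
  assumes "0 < \<alpha>" "0 < \<theta>"
  shows "W_law \<alpha> \<theta> = density lborel (\<lambda>y. ennreal (if 0 < y then
      \<theta> * y powr (\<theta> - 1) * (1 + y powr \<alpha>) powr (-(\<theta> + \<alpha>) / \<alpha>) else 0))"
  using assms by (intro W_law_eqI AE_density_lborel_pos emeasure_W_density_atMost) simp_all

lemma measure_W_law_atMost: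
  assumes "0 < \<alpha>" "0 < \<theta>" "0 < y"
  shows "measure (W_law \<alpha> \<theta>) {..y} = y powr \<theta> * (1 + y powr \<alpha>) powr (-\<theta> / \<alpha>)"
  using assms by (simp add: measure_def emeasure_W_law_atMost W_cdf_def)

lemma W_law_eq_pow_law_gamma_ratio:
  assumes "0 < \<alpha>" "0 < \<theta>"
  shows "W_law \<alpha> \<theta> = pow_law (ratio_law (gamma_law (\<theta> / \<alpha>)) (gamma_law 1)) (1 / \<alpha>)"
  using assms
  by (intro W_law_eqI AE_pow_law_pos AE_ratio_law_pos AE_gamma_law_pos real_distribution_gamma_law
      emeasure_pow_law_gamma_ratio_atMost) simp_all

section \<open>Positive stable laws\<close>

locale positive_stable =
  fixes \<alpha> :: real and f :: "real \<Rightarrow> real"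
  assumes alpha_pos: "0 < \<alpha>" and stable_density: "pos_stable_density \<alpha> f"
begin

lemma f_measurable [measurable]: "f \<in> borel_measurable borel"
  and f_nonneg: "0 \<le> f t"
  and f_nonpos: "t \<le> 0 \<Longrightarrow> f t = 0"
  using stable_density by (simp_all add: pos_stable_density_def)

lemma sets_stable_law [simp]: "sets (stable_law f) = sets borel"
  by (simp add: stable_law_def)

lemma measurable_stable_law [simp]: "measurable (stable_law f) K = measurable borel K"
  by (rule measurable_cong_sets) simp_all

lemma nn_integral_stable_law_exp:
  assumes "0 \<le> l"
  shows "(\<integral>\<^sup>+s. ennreal (exp (-(l * s))) \<partial>stable_law f) = ennreal (exp (-(l powr \<alpha>)))"
proof -
  have "has_bochner_integral lborel (\<lambda>s. exp (-(l * s)) * f s) (exp (-(l powr \<alpha>)))"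
    using stable_density assms by (simp add: pos_stable_density_def)
  then have "(\<integral>\<^sup>+s. ennreal (exp (-(l * s)) * f s) \<partial>lborel) = ennreal (exp (-(l powr \<alpha>)))"
    using f_nonneg by (simp add: has_bochner_integral_iff nn_integral_eq_integral)
  then show ?thesis
    using f_nonneg by (simp add: stable_law_def nn_integral_density ennreal_mult'[symmetric] mult.commute)
qed

lemma real_distribution_stable_law: "real_distribution (stable_law f)"
  using nn_integral_stable_law_exp[of 0] alpha_pos by (intro real_distributionI) simp_all

lemma AE_stable_law_pos: "AE s in stable_law f. 0 < s"
  unfolding stable_law_def by (rule AE_density_lborel_pos) (simp_all add: f_nonpos)

lemma nn_integral_stable_law_laplace_mixture:
  assumes [measurable]: "g \<in> borel_measurable borel" and g: "\<And>x. x < 0 \<Longrightarrow> g x = 0"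
  shows "(\<integral>\<^sup>+s. \<integral>\<^sup>+x. g x * ennreal (exp (-(x * s))) \<partial>lborel \<partial>stable_law f)
    = (\<integral>\<^sup>+x. g x * ennreal (exp (-(x powr \<alpha>))) \<partial>lborel)"
proof -
  have "(\<integral>\<^sup>+s. \<integral>\<^sup>+x. g x * ennreal (exp (-(x * s))) \<partial>lborel \<partial>stable_law f)
      = (\<integral>\<^sup>+x. \<integral>\<^sup>+s. g x * ennreal (exp (-(x * s))) \<partial>stable_law f \<partial>lborel)"
    by (rule nn_integral_swap_borel[OF real_distribution_sigma_finite[OF real_distribution_stable_law]
          sigma_finite_lborel]) (simp, simp, measurable)
  also have "\<dots> = (\<integral>\<^sup>+x. g x * ennreal (exp (-(x powr \<alpha>))) \<partial>lborel)"
  proof (intro nn_integral_cong)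
    fix x :: real
    show "(\<integral>\<^sup>+s. g x * ennreal (exp (-(x * s))) \<partial>stable_law f) = g x * ennreal (exp (-(x powr \<alpha>)))"
      using g[of x] by (cases "x < 0") (simp_all add: nn_integral_cmult nn_integral_stable_law_exp)
  qed
  finally show ?thesis .
qed

text \<open>Rescaling the gamma variable by \<open>s\<close> absorbs \<open>s^(-\<theta>)\<close> and produces a factor \<open>exp(-x s)\<close>, so the
  integral over \<open>s\<close> becomes a mixture of Laplace transforms of \<open>S\<^sub>\<alpha>\<close>. The case \<open>c = 0\<close> computes
  the normalising constant of the tilted law.\<close>
lemma nn_integral_stable_law_gamma:
  assumes \<theta>: "0 < \<theta>" and c: "0 \<le> c"
  shows "(\<integral>\<^sup>+s. ennreal (s powr (-\<theta>)) * (\<integral>\<^sup>+g. ennreal (exp (-((c * g / s) powr \<alpha>))) \<partial>gamma_law \<theta>) \<partial>stable_law f)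
    = ennreal (Gamma (\<theta> / \<alpha>) / (\<alpha> * Gamma \<theta>) * (1 + c powr \<alpha>) powr (-\<theta> / \<alpha>))"
proof -
  define g where "g x = ennreal (if 0 < x then x powr (\<theta> - 1) / Gamma \<theta> else 0) * ennreal (exp (-((c * x) powr \<alpha>)))" for x
  have [measurable]: "g \<in> borel_measurable borel" unfolding g_def by measurable
  have G: "0 < Gamma \<theta>" using \<theta> by (rule Gamma_real_pos)
  have "(\<integral>\<^sup>+s. ennreal (s powr (-\<theta>)) * (\<integral>\<^sup>+g. ennreal (exp (-((c * g / s) powr \<alpha>))) \<partial>gamma_law \<theta>) \<partial>stable_law f)
      = (\<integral>\<^sup>+s. \<integral>\<^sup>+x. g x * ennreal (exp (-(x * s))) \<partial>lborel \<partial>stable_law f)"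
  proof (rule nn_integral_cong_AE[OF eventually_mono[OF AE_stable_law_pos]])
    fix s :: real assume s: "0 < s"
    show "ennreal (s powr (-\<theta>)) * (\<integral>\<^sup>+g. ennreal (exp (-((c * g / s) powr \<alpha>))) \<partial>gamma_law \<theta>)
        = (\<integral>\<^sup>+x. g x * ennreal (exp (-(x * s))) \<partial>lborel)"
      unfolding times_divide_eq_right[symmetric, of c] g_def
      using \<theta> s by (rule nn_integral_gamma_law_divide[where h="\<lambda>x. ennreal (exp (-((c * x) powr \<alpha>)))"]) simp
  qed
  also have "\<dots> = (\<integral>\<^sup>+x. g x * ennreal (exp (-(x powr \<alpha>))) \<partial>lborel)"
    by (rule nn_integral_stable_law_laplace_mixture) (simp_all add: g_def)
  also have "\<dots> = (\<integral>\<^sup>+x. ennreal (1 / Gamma \<theta>)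
      * ennreal (if 0 < x then x powr (\<theta> - 1) * exp (-((1 + c powr \<alpha>) * x powr \<alpha>)) else 0) \<partial>lborel)"
  proof (intro nn_integral_cong)
    fix x :: real
    have "0 < x \<Longrightarrow> exp (-((c * x) powr \<alpha>)) * exp (-(x powr \<alpha>)) = exp (-((1 + c powr \<alpha>) * x powr \<alpha>))"
      using c by (simp add: powr_mult exp_add[symmetric] algebra_simps)
    then show "g x * ennreal (exp (-(x powr \<alpha>)))
        = ennreal (1 / Gamma \<theta>) * ennreal (if 0 < x then x powr (\<theta> - 1) * exp (-((1 + c powr \<alpha>) * x powr \<alpha>)) else 0)"
      using G by (simp add: g_def ennreal_mult[symmetric] mult_ac)
  qed
  also have "\<dots> = ennreal (1 / Gamma \<theta>) * ennreal (Gamma (\<theta> / \<alpha>) / (\<alpha> * (1 + c powr \<alpha>) powr (\<theta> / \<alpha>)))"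
    using \<theta> alpha_pos c by (simp add: nn_integral_cmult nn_integral_powr_exp_powr add_pos_nonneg)
  also have "\<dots> = ennreal (Gamma (\<theta> / \<alpha>) / (\<alpha> * Gamma \<theta>) * (1 + c powr \<alpha>) powr (-\<theta> / \<alpha>))"
  proof -
    have "1 / Gamma \<theta> * (Gamma (\<theta> / \<alpha>) / (\<alpha> * (1 + c powr \<alpha>) powr (\<theta> / \<alpha>)))
        = Gamma (\<theta> / \<alpha>) / (\<alpha> * Gamma \<theta>) * (1 + c powr \<alpha>) powr (-\<theta> / \<alpha>)"
      by (simp add: powr_minus_divide)
    then show ?thesis using G by (subst ennreal_mult'[symmetric]) simp_all
  qed
  finally show ?thesis .
qed

lemma nn_integral_stable_law_powr:
  assumes "0 < \<theta>"
  shows "(\<integral>\<^sup>+s. ennreal (s powr (-\<theta>)) \<partial>stable_law f) = ennreal (Gamma (\<theta> / \<alpha>) / (\<alpha> * Gamma \<theta>))"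
proof -
  have "(\<integral>\<^sup>+g. ennreal (exp (-((0 * g / s) powr \<alpha>))) \<partial>gamma_law \<theta>) = 1" for s
    using assms prob_space.emeasure_space_1[OF real_distribution.axioms(1)[OF real_distribution_gamma_law]]
    by simp
  then show ?thesis
    using nn_integral_stable_law_gamma[OF assms, of 0] alpha_pos by simp
qed

lemma tilted_stable_normalizer:
  assumes \<theta>: "0 < \<theta>"
  shows "(LINT s|lborel. (if 0 < s then s powr (-\<theta>) * f s else 0)) = Gamma (\<theta> / \<alpha>) / (\<alpha> * Gamma \<theta>)"
proof -
  have "(\<integral>\<^sup>+s. ennreal (if 0 < s then s powr (-\<theta>) * f s else 0) \<partial>lborel)
      = (\<integral>\<^sup>+s. ennreal (s powr (-\<theta>)) \<partial>stable_law f)"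
    unfolding stable_law_def using f_nonneg
    by (subst nn_integral_density) (auto simp: f_nonpos ennreal_mult'[symmetric] mult.commute intro!: nn_integral_cong)
  also have "\<dots> = ennreal (Gamma (\<theta> / \<alpha>) / (\<alpha> * Gamma \<theta>))"
    using \<theta> by (rule nn_integral_stable_law_powr)
  finally show ?thesis
    using \<theta> alpha_pos f_nonneg Gamma_real_pos[of \<theta>] Gamma_real_pos[of "\<theta> / \<alpha>"]
    by (intro has_bochner_integral_integral_eq has_bochner_integral_nn_integral) simp_all
qed

lemma sets_tilted_stable_law [simp]: "sets (tilted_stable_law f \<theta>) = sets borel"
  by (simp add: tilted_stable_law_def)

lemma nn_integral_tilted_stable_law:
  assumes \<theta>: "0 < \<theta>" and [measurable]: "h \<in> borel_measurable borel"
  shows "(\<integral>\<^sup>+s. h s \<partial>tilted_stable_law f \<theta>)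
    = ennreal (\<alpha> * Gamma \<theta> / Gamma (\<theta> / \<alpha>)) * (\<integral>\<^sup>+s. ennreal (s powr (-\<theta>)) * h s \<partial>stable_law f)"
proof -
  define N where "N = Gamma (\<theta> / \<alpha>) / (\<alpha> * Gamma \<theta>)"
  have N: "0 < N" using \<theta> alpha_pos by (simp add: N_def Gamma_real_pos)
  have "tilted_stable_law f \<theta> = density lborel (\<lambda>s. ennreal (if 0 < s then s powr (-\<theta>) * f s / N else 0))"
    unfolding tilted_stable_law_def tilted_stable_normalizer[OF \<theta>] N_def ..
  then have "(\<integral>\<^sup>+s. h s \<partial>tilted_stable_law f \<theta>)
      = (\<integral>\<^sup>+s. ennreal (if 0 < s then s powr (-\<theta>) * f s / N else 0) * h s \<partial>lborel)"
    by (simp add: nn_integral_density)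
  also have "\<dots> = (\<integral>\<^sup>+s. ennreal (1 / N) * (ennreal (f s) * (ennreal (s powr (-\<theta>)) * h s)) \<partial>lborel)"
  proof (intro nn_integral_cong)
    fix s :: real
    show "ennreal (if 0 < s then s powr (-\<theta>) * f s / N else 0) * h s
        = ennreal (1 / N) * (ennreal (f s) * (ennreal (s powr (-\<theta>)) * h s))"
    proof (cases "0 < s")
      case True
      have "ennreal (s powr (-\<theta>) * f s / N) = ennreal (1 / N) * (ennreal (f s) * ennreal (s powr (-\<theta>)))"
        using N f_nonneg[of s] by (simp add: ennreal_mult[symmetric] mult_ac)
      then show ?thesis using True by (simp add: mult.assoc)
    qed (simp add: f_nonpos)
  qed
  also have "\<dots> = ennreal (1 / N) * (\<integral>\<^sup>+s. ennreal (s powr (-\<theta>)) * h s \<partial>stable_law f)"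
    by (simp add: stable_law_def nn_integral_density nn_integral_cmult)
  finally show ?thesis
    using \<theta> alpha_pos by (simp add: N_def)
qed

lemma real_distribution_tilted_stable_law:
  assumes \<theta>: "0 < \<theta>"
  shows "real_distribution (tilted_stable_law f \<theta>)"
proof (rule real_distributionI)
  have "emeasure (tilted_stable_law f \<theta>) (space (tilted_stable_law f \<theta>)) = (\<integral>\<^sup>+s. 1 \<partial>tilted_stable_law f \<theta>)"
    by simp
  also have "\<dots> = ennreal (\<alpha> * Gamma \<theta> / Gamma (\<theta> / \<alpha>)) * ennreal (Gamma (\<theta> / \<alpha>) / (\<alpha> * Gamma \<theta>))"
    using \<theta> by (subst nn_integral_tilted_stable_law) (simp_all add: nn_integral_stable_law_powr)
  also have "\<dots> = 1"
  proof -
    have "0 < Gamma \<theta>" "0 < Gamma (\<theta> / \<alpha>)"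
      using \<theta> alpha_pos by (simp_all add: Gamma_real_pos)
    then show ?thesis using alpha_pos by (simp add: ennreal_mult'[symmetric])
  qed
  finally show "emeasure (tilted_stable_law f \<theta>) (space (tilted_stable_law f \<theta>)) = 1" .
qed simp

lemma AE_tilted_stable_law_pos: "AE s in tilted_stable_law f \<theta>. 0 < s"
  unfolding tilted_stable_law_def by (rule AE_density_lborel_pos) simp_all

lemma real_distribution_X_law: "0 < \<theta> \<Longrightarrow> real_distribution (X_law f \<theta>)"
  unfolding X_law_def
  by (intro real_distribution_ratio_law real_distribution_stable_law real_distribution_tilted_stable_law)

lemma AE_X_law_pos: "0 < \<theta> \<Longrightarrow> AE q in X_law f \<theta>. 0 < q"
  unfolding X_law_def
  by (intro AE_ratio_law_pos real_distribution_stable_law real_distribution_tilted_stable_law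
      AE_stable_law_pos AE_tilted_stable_law_pos)

lemma nn_integral_X_law_exp:
  assumes \<theta>: "0 < \<theta>" and c: "0 \<le> c"
  shows "(\<integral>\<^sup>+q. ennreal (exp (-(c * q))) \<partial>X_law f \<theta>)
    = (\<integral>\<^sup>+s. ennreal (exp (-((c / s) powr \<alpha>))) \<partial>tilted_stable_law f \<theta>)"
proof -
  have "(\<integral>\<^sup>+q. ennreal (exp (-(c * q))) \<partial>X_law f \<theta>)
      = (\<integral>\<^sup>+s'. \<integral>\<^sup>+s. ennreal (exp (-(c * (s / s')))) \<partial>stable_law f \<partial>tilted_stable_law f \<theta>)"
    unfolding X_law_def using \<theta>
    by (intro nn_integral_ratio_law_swap real_distribution_stable_law real_distribution_tilted_stable_law) simp_all
  also have "\<dots> = (\<integral>\<^sup>+s'. ennreal (exp (-((c / s') powr \<alpha>))) \<partial>tilted_stable_law f \<theta>)"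
  proof (rule nn_integral_cong_AE[OF eventually_mono[OF AE_tilted_stable_law_pos]])
    fix s' :: real assume "0 < s'"
    then show "(\<integral>\<^sup>+s. ennreal (exp (-(c * (s / s')))) \<partial>stable_law f) = ennreal (exp (-((c / s') powr \<alpha>)))"
      using c nn_integral_stable_law_exp[of "c / s'"] by simp
  qed
  finally show ?thesis .
qed

text \<open>This coincides with the Laplace transform of \<open>\<chi>\<^sub>\<alpha>\<^sub>,\<^sub>\<theta>\<close>.\<close>
lemma nn_integral_gamma_X_law_exp:
  assumes \<theta>: "0 < \<theta>" and c: "0 \<le> c"
  shows "(\<integral>\<^sup>+g. \<integral>\<^sup>+q. ennreal (exp (-(c * g * q))) \<partial>X_law f \<theta> \<partial>gamma_law \<theta>) = ennreal ((1 + c powr \<alpha>) powr (-\<theta> / \<alpha>))"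
proof -
  have "(\<integral>\<^sup>+g. \<integral>\<^sup>+q. ennreal (exp (-(c * g * q))) \<partial>X_law f \<theta> \<partial>gamma_law \<theta>)
      = (\<integral>\<^sup>+g. \<integral>\<^sup>+s. ennreal (exp (-((c * g / s) powr \<alpha>))) \<partial>tilted_stable_law f \<theta> \<partial>gamma_law \<theta>)"
    using \<theta> c by (intro nn_integral_cong_AE[OF eventually_mono[OF AE_gamma_law_pos]] nn_integral_X_law_exp) simp_all
  also have "\<dots> = (\<integral>\<^sup>+s. \<integral>\<^sup>+g. ennreal (exp (-((c * g / s) powr \<alpha>))) \<partial>gamma_law \<theta> \<partial>tilted_stable_law f \<theta>)"
    using \<theta>
    by (intro nn_integral_swap_borel real_distribution_sigma_finite real_distribution_gamma_law
        real_distribution_tilted_stable_law) simp_all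
  also have "\<dots> = ennreal (\<alpha> * Gamma \<theta> / Gamma (\<theta> / \<alpha>))
      * ennreal (Gamma (\<theta> / \<alpha>) / (\<alpha> * Gamma \<theta>) * (1 + c powr \<alpha>) powr (-\<theta> / \<alpha>))"
    using \<theta> c real_distribution_gamma_law[OF \<theta>]
    by (simp add: nn_integral_tilted_stable_law borel_measurable_nn_integral_param nn_integral_stable_law_gamma)
  also have "\<dots> = ennreal ((1 + c powr \<alpha>) powr (-\<theta> / \<alpha>))"
  proof -
    have "0 < Gamma \<theta>" "0 < Gamma (\<theta> / \<alpha>)"
      using \<theta> alpha_pos by (simp_all add: Gamma_real_pos)
    then show ?thesis using alpha_pos by (simp add: ennreal_mult'[symmetric])
  qed
  finally show ?thesis .
qed

lemma real_distribution_chi_law: "0 < \<theta> \<Longrightarrow> real_distribution (chi_law \<alpha> f \<theta>)"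
  unfolding chi_law_def using alpha_pos
  by (intro real_distribution_prod_law real_distribution_pow_law real_distribution_gamma_law
      real_distribution_stable_law) simp

lemma AE_chi_law_pos: "0 < \<theta> \<Longrightarrow> AE z in chi_law \<alpha> f \<theta>. 0 < z"
  unfolding chi_law_def using alpha_pos
  by (intro AE_prod_law_pos real_distribution_pow_law real_distribution_gamma_law real_distribution_stable_law
      AE_pow_law_pos AE_gamma_law_pos AE_stable_law_pos) simp_all

lemma emeasure_ratio_chi_law_atMost:
  assumes \<theta>: "0 < \<theta>" and y: "0 < y"
  shows "emeasure (ratio_law (chi_law \<alpha> f \<theta>) (gamma_law 1)) {..y} = ennreal (W_cdf \<alpha> \<theta> y)"
proof -
  have G: "real_distribution (gamma_law (\<theta> / \<alpha>))"
    using \<theta> alpha_pos by (simp add: real_distribution_gamma_law)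
  have [measurable]: "(\<lambda>u. \<integral>\<^sup>+s. ennreal (exp (-(u * s / y))) \<partial>stable_law f) \<in> borel_measurable borel"
    using real_distribution_stable_law by (rule borel_measurable_nn_integral_param) simp
  have "emeasure (ratio_law (chi_law \<alpha> f \<theta>) (gamma_law 1)) {..y} = (\<integral>\<^sup>+z. ennreal (exp (-(z / y))) \<partial>chi_law \<alpha> f \<theta>)"
    using \<theta> y by (intro emeasure_ratio_law_by_gamma_1_atMost real_distribution_chi_law AE_chi_law_pos)
  also have "\<dots> = (\<integral>\<^sup>+g. \<integral>\<^sup>+s. ennreal (exp (-(g powr (1 / \<alpha>) * s / y))) \<partial>stable_law f \<partial>gamma_law (\<theta> / \<alpha>))"
    unfolding chi_law_def using G
    by (simp add: nn_integral_prod_law nn_integral_pow_law real_distribution_pow_law real_distribution_stable_law)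
  also have "\<dots> = (\<integral>\<^sup>+g. ennreal (exp (-((1 / y) powr \<alpha> * g))) \<partial>gamma_law (\<theta> / \<alpha>))"
  proof (rule nn_integral_cong_AE[OF eventually_mono[OF AE_gamma_law_pos]])
    fix g :: real assume g: "0 < g"
    have "(g powr (1 / \<alpha>) / y) powr \<alpha> = (1 / y) powr \<alpha> * g"
      using g y alpha_pos by (simp add: powr_divide powr_powr)
    then show "(\<integral>\<^sup>+s. ennreal (exp (-(g powr (1 / \<alpha>) * s / y))) \<partial>stable_law f) = ennreal (exp (-((1 / y) powr \<alpha> * g)))"
      using g y nn_integral_stable_law_exp[of "g powr (1 / \<alpha>) / y"] by simp
  qed
  also have "\<dots> = ennreal (W_cdf \<alpha> \<theta> y)"
    using alpha_pos \<theta> y nn_integral_gamma_law_exp[of "\<theta> / \<alpha>" "(1 / y) powr \<alpha>"]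
    by (simp add: W_cdf_eq_laplace less_le_trans[OF _ powr_ge_zero])
  finally show ?thesis .
qed

lemma emeasure_prod_gamma_ratio_X_law_atMost:
  assumes \<theta>: "0 < \<theta>" and y: "0 < y"
  shows "emeasure (prod_law (ratio_law (gamma_law \<theta>) (gamma_law 1)) (X_law f \<theta>)) {..y} = ennreal (W_cdf \<alpha> \<theta> y)"
proof -
  have D: "real_distribution (gamma_law \<theta>)" "real_distribution (gamma_law 1)" "real_distribution (X_law f \<theta>)"
    using \<theta> by (simp_all add: real_distribution_gamma_law real_distribution_X_law)
  have [measurable]: "(\<lambda>g. \<integral>\<^sup>+q. ennreal (exp (-(g * q / y))) \<partial>X_law f \<theta>) \<in> borel_measurable borel"
    using D(3) by (rule borel_measurable_nn_integral_param) simp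
  have "emeasure (prod_law (ratio_law (gamma_law \<theta>) (gamma_law 1)) (X_law f \<theta>)) {..y}
      = emeasure (ratio_law (prod_law (gamma_law \<theta>) (X_law f \<theta>)) (gamma_law 1)) {..y}"
    using D by (simp add: prod_law_ratio_law)
  also have "\<dots> = (\<integral>\<^sup>+z. ennreal (exp (-(z / y))) \<partial>prod_law (gamma_law \<theta>) (X_law f \<theta>))"
    using D y \<theta> by (intro emeasure_ratio_law_by_gamma_1_atMost real_distribution_prod_law AE_prod_law_pos
        AE_gamma_law_pos AE_X_law_pos)
  also have "\<dots> = (\<integral>\<^sup>+g. \<integral>\<^sup>+q. ennreal (exp (-(1 / y * g * q))) \<partial>X_law f \<theta> \<partial>gamma_law \<theta>)"
    using D by (simp add: nn_integral_prod_law)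
  also have "\<dots> = ennreal (W_cdf \<alpha> \<theta> y)"
    using \<theta> y alpha_pos nn_integral_gamma_X_law_exp[OF \<theta>, of "1 / y"] by (simp add: W_cdf_eq_laplace)
  finally show ?thesis .
qed

lemma laplace_gamma_ratio_X_sigma_law:
  assumes \<sigma>: "0 < \<sigma>" "\<sigma> \<le> 1" and l: "0 \<le> l"
  shows "(\<integral>x. exp (-(l * x)) \<partial>ratio_law (gamma_law 1) (X_sigma_law f \<sigma>))
    = 1 - l powr \<sigma> * (1 + l powr \<alpha>) powr (-\<sigma> / \<alpha>)"
proof -
  let ?\<Sigma> = "ratio_law (gamma_law 1) (X_sigma_law f \<sigma>)"
  have D: "real_distribution (gamma_law 1)" "real_distribution (gamma_law \<sigma>)"
    "real_distribution (beta_law \<sigma> (1 - \<sigma>))" "real_distribution (X_law f \<sigma>)"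
    using \<sigma> by (simp_all add: real_distribution_gamma_law real_distribution_beta_law real_distribution_X_law)
  then have D': "real_distribution (X_sigma_law f \<sigma>)" "real_distribution ?\<Sigma>"
    unfolding X_sigma_law_def by (simp_all add: real_distribution_prod_law real_distribution_ratio_law)
  have pos: "AE x in ?\<Sigma>. 0 < x"
    using D D' \<sigma> unfolding X_sigma_law_def
    by (intro AE_ratio_law_pos AE_prod_law_pos AE_gamma_law_pos AE_beta_law_pos AE_X_law_pos) simp_all
  \<comment> \<open>\<open>\<gamma>\<^sub>1' / \<Sigma> = \<gamma>\<^sub>1' \<beta> X / \<gamma>\<^sub>1\<close> and \<open>\<gamma>\<^sub>1' \<beta>\<^sub>\<sigma>\<^sub>,\<^sub>1\<^sub>-\<^sub>\<sigma> = \<gamma>\<^sub>\<sigma>\<close>\<close>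
  have "ratio_law (gamma_law 1) ?\<Sigma> = ratio_law (prod_law (gamma_law 1) (X_sigma_law f \<sigma>)) (gamma_law 1)"
    using D D' by (simp add: ratio_law_ratio_law)
  also have "\<dots> = ratio_law (prod_law (prod_law (gamma_law 1) (beta_law \<sigma> (1 - \<sigma>))) (X_law f \<sigma>)) (gamma_law 1)"
    using D by (simp add: X_sigma_law_def prod_law_assoc)
  also have "\<dots> = prod_law (ratio_law (gamma_law \<sigma>) (gamma_law 1)) (X_law f \<sigma>)"
    using D \<sigma> prod_law_gamma_beta[of \<sigma> "1 - \<sigma>"] by (simp add: prod_law_ratio_law)
  finally have law: "ratio_law (gamma_law 1) ?\<Sigma> = prod_law (ratio_law (gamma_law \<sigma>) (gamma_law 1)) (X_law f \<sigma>)" .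
  have "(\<integral>\<^sup>+x. ennreal (1 - exp (-(l * x))) \<partial>?\<Sigma>) = ennreal (l powr \<sigma> * (1 + l powr \<alpha>) powr (-\<sigma> / \<alpha>))"
  proof (cases "l = 0")
    case True
    then show ?thesis by simp
  next
    case False
    then have "0 < l" using l by simp
    then show ?thesis
      using D' pos \<sigma> by (simp add: emeasure_ratio_law_of_gamma_1_atMost[symmetric] law
          emeasure_prod_gamma_ratio_X_law_atMost W_cdf_def)
  qed
  moreover have "AE x in ?\<Sigma>. 0 \<le> exp (-(l * x)) \<and> exp (-(l * x)) \<le> 1"
    using pos by eventually_elim (use l in simp)
  ultimately show ?thesis
    using D'(2) by (intro integral_eq_1_minus_nn_integral real_distribution.axioms(1)) simp_all
qed


lemma W_law_eq_ratio_chi_law: "0 < \<theta> \<Longrightarrow> W_law \<alpha> \<theta> = ratio_law (chi_law \<alpha> f \<theta>) (gamma_law 1)"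
  using alpha_pos
  by (intro W_law_eqI AE_ratio_law_pos real_distribution_chi_law real_distribution_gamma_law AE_chi_law_pos
      AE_gamma_law_pos emeasure_ratio_chi_law_atMost) simp_all

lemma W_law_eq_prod_gamma_ratio_X_law:
  "0 < \<theta> \<Longrightarrow> W_law \<alpha> \<theta> = prod_law (ratio_law (gamma_law \<theta>) (gamma_law 1)) (X_law f \<theta>)"
  using alpha_pos
  by (intro W_law_eqI AE_prod_law_pos AE_ratio_law_pos real_distribution_ratio_law real_distribution_X_law
      real_distribution_gamma_law AE_gamma_law_pos AE_X_law_pos emeasure_prod_gamma_ratio_X_law_atMost) simp_all

end

theorem proposition2p9:
  fixes \<alpha> :: real and f :: "real \<Rightarrow> real"
  assumes "0 < \<alpha>" and "\<alpha> < 1" and "pos_stable_density \<alpha> f"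
  shows "(\<forall>\<theta>>0.
            W_law \<alpha> \<theta> = density lborel (\<lambda>y. ennreal (if 0 < y then
                \<theta> * y powr (\<theta> - 1) * (1 + y powr \<alpha>) powr (-(\<theta> + \<alpha>) / \<alpha>) else 0))
          \<and> (\<forall>y>0. measure (W_law \<alpha> \<theta>) {..y} = y powr \<theta> * (1 + y powr \<alpha>) powr (-\<theta> / \<alpha>))
          \<and> W_law \<alpha> \<theta> = pow_law (ratio_law (gamma_law (\<theta> / \<alpha>)) (gamma_law 1)) (1 / \<alpha>)
          \<and> W_law \<alpha> \<theta> = ratio_law (chi_law \<alpha> f \<theta>) (gamma_law 1)
          \<and> W_law \<alpha> \<theta> = prod_law (ratio_law (gamma_law \<theta>) (gamma_law 1)) (X_law f \<theta>))
       \<and> (\<forall>\<sigma>. 0 < \<sigma> \<and> \<sigma> \<le> 1 \<longrightarrow> (\<forall>l\<ge>0.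
            (\<integral>x. exp (-(l * x)) \<partial>(ratio_law (gamma_law 1) (X_sigma_law f \<sigma>)))
              = 1 - l powr \<sigma> * (1 + l powr \<alpha>) powr (-\<sigma> / \<alpha>)))"
proof -
  interpret positive_stable \<alpha> f
    using assms(1,3) by unfold_locales
  show ?thesis
    using W_law_eq_density[OF assms(1)] measure_W_law_atMost[OF assms(1)]
      W_law_eq_pow_law_gamma_ratio[OF assms(1)] W_law_eq_ratio_chi_law W_law_eq_prod_gamma_ratio_X_law
      laplace_gamma_ratio_X_sigma_law
    by blast
qed

end
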